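(* Let $X=\mathbb T^2=\mathbb R^2/\mathbb Z^2$ with Haar measure $\mu$, and let $\rho_t(v)=tv$ for $v\in\mathbb R^2$, $t\in\mathbb R$. There exists a function $\phi\colon(0,1)\to\mathbb R^2$ such that for every $x_0\in\mathbb T^2$, the family of measures $(\mu_t)_{t\ge0}$ defined by $\int_Xf\,d\mu_t=\int_0^1 f(t\phi(u)+x_0)\,du$ for $f\in C(X)$ is weakly equidistributed but not equidistributed on $X$.
   Context: A family $(\mu_t)_{t\ge0}$ of probability measures on $X$ is equidistributed if $\int f\,d\mu_t\to\int f\,d\mu$ as $t\to\infty$ for all $f\in C(X)$; it is weakly equidistributed if there is a set $A\subset[0,\infty)$ with $\lim_{T\to\infty}\lambda(A\cap[0,T])/T=1$ ($\lambda$ Lebesgue measure) such that $\int f\,d\mu_t\to\int f\,d\mu$ as $t\to\infty$ with $t\in A$, for all $f\in C(X)$. *)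

theory Defs
  imports "HOL-Analysis.Analysis"
begin

text \<open>The torus T^2 = R^2/Z^2. A continuous function on T^2 is represented by a
continuous Z^2-periodic function on R^2; points of T^2 by representatives in R^2.\<close>

definition torus_fun :: "(real^2 \<Rightarrow> real) \<Rightarrow> bool" where
  "torus_fun f \<longleftrightarrow> continuous_on UNIV f \<and>
     (\<forall>v k. (\<forall>i. k $ i \<in> \<int>) \<longrightarrow> f (v + k) = f v)"

text \<open>Integral against the Haar (Lebesgue probability) measure of T^2,
computed over the fundamental domain [0,1]^2.\<close>
definition haar_int :: "(real^2 \<Rightarrow> real) \<Rightarrow> real" where
  "haar_int f = integral (cbox 0 One) f"

definition curve_int :: "(real \<Rightarrow> real^2) \<Rightarrow> real^2 \<Rightarrow> real \<Rightarrow> (real^2 \<Rightarrow> real) \<Rightarrow> real" where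
  "curve_int \<phi> x0 t f = integral {0<..<1} (\<lambda>u. f (t *\<^sub>R \<phi> u + x0))"

definition equidistributed :: "(real \<Rightarrow> (real^2 \<Rightarrow> real) \<Rightarrow> real) \<Rightarrow> bool" where
  "equidistributed \<mu> \<longleftrightarrow>
     (\<forall>f. torus_fun f \<longrightarrow> ((\<lambda>t. \<mu> t f) \<longlongrightarrow> haar_int f) at_top)"

definition weakly_equidistributed :: "(real \<Rightarrow> (real^2 \<Rightarrow> real) \<Rightarrow> real) \<Rightarrow> bool" where
  "weakly_equidistributed \<mu> \<longleftrightarrow>
     (\<exists>A. A \<subseteq> {0..} \<and> A \<in> sets lebesgue \<and>
        ((\<lambda>T. measure lebesgue (A \<inter> {0..T}) / T) \<longlongrightarrow> 1) at_top \<and>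
        (\<forall>f. torus_fun f \<longrightarrow>
           ((\<lambda>t. \<mu> t f) \<longlongrightarrow> haar_int f) (inf at_top (principal A))))"

end

theory Submission
  imports Defs "HOL-Computational_Algebra.Polynomial"
begin

(* Take phi(u) = c(u) (1, sqrt 2), where c sends the binary digits of u to the ternary digits 0
   and 2; c is strictly increasing on [0,1) with values in the Cantor set.

   Since 3^n c(u) lies in [0,1/3] + Z or [2/3,1] + Z, at the times t = 3^n the curve t phi + x0 never
   meets the strip where the first coordinate is at distance more than 1/3 from that of x0 modulo 1.
   A continuous bump supported in this strip has positive Haar integral but vanishing integral
   against mu_(3^n), so (mu_t) is not equidistributed.

   For weak equidistribution it suffices, by density of trigonometric polynomials, that every
   nontrivial Fourier coefficient of mu_t tends to 0 along one set of density one. Up to a phase, the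
   coefficient at (a, b) is the Fourier transform at t of the image of Lebesgue measure on (0,1)
   under u |-> (a + b sqrt 2) c(u). This map is injective because sqrt 2 is irrational, so by
   Wiener's lemma the squared modulus has Cesaro means tending to 0, and then it tends to 0 off a set
   of density zero. A diagonal argument over the countably many frequencies gives a single set. *)

section \<open>A Cantor-type map\<close>

definition ternary_series :: "(nat \<Rightarrow> real) \<Rightarrow> real" where
  "ternary_series b = (\<Sum>j. 2 * b j / 3 ^ Suc j)"

lemma summable_ternary_series:
  fixes b :: "nat \<Rightarrow> real"
  assumes "range b \<subseteq> {0..1}"
  shows "summable (\<lambda>j. 2 * b j / 3 ^ Suc j)"
proof (rule summable_comparison_test)
  show "\<exists>N. \<forall>n\<ge>N. norm (2 * b n / 3 ^ Suc n) \<le> 2 * (1 / 3) ^ Suc n"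
    using assms by (auto simp: image_subset_iff power_one_over divide_le_cancel)
  show "summable (\<lambda>j. 2 * (1 / 3::real) ^ Suc j)"
    by (intro summable_mult summable_Suc_iff[THEN iffD2]) (simp add: summable_geometric)
qed

lemma ternary_series_mono:
  assumes "range b \<subseteq> {0..1}" "range b' \<subseteq> {0..1}" "\<And>j. b j \<le> b' j"
  shows "ternary_series b \<le> ternary_series b'"
  unfolding ternary_series_def
  using assms by (intro suminf_le summable_ternary_series) (auto simp: divide_right_mono)

lemma ternary_series_0: "ternary_series (\<lambda>_. 0) = 0"
  by (simp add: ternary_series_def)

lemma ternary_series_1: "ternary_series (\<lambda>_. 1) = 1"
proof -
  have "ternary_series (\<lambda>_. 1) = (2/3) * (\<Sum>j. (1/3::real) ^ j)"
    unfolding ternary_series_def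
    by (subst suminf_mult[symmetric]) (auto simp: summable_geometric power_one_over)
  also have "\<dots> = 1" by (subst suminf_geometric) auto
  finally show ?thesis .
qed

lemma ternary_series_bounds:
  assumes "range b \<subseteq> {0..1}"
  shows "0 \<le> ternary_series b" "ternary_series b \<le> 1"
proof -
  have "\<And>j. 0 \<le> b j" "\<And>j. b j \<le> 1" using assms by (auto simp: image_subset_iff)
  then show "0 \<le> ternary_series b" "ternary_series b \<le> 1"
    using ternary_series_mono[of "\<lambda>_. 0" b] ternary_series_mono[of b "\<lambda>_. 1"] assms
    by (auto simp: ternary_series_0 ternary_series_1)
qed

lemma ternary_series_Suc:
  assumes "range b \<subseteq> {0..1}"
  shows "ternary_series b = (2 * b 0 + ternary_series (\<lambda>j. b (Suc j))) / 3"
proof -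
  have tail: "range (\<lambda>j. b (Suc j)) \<subseteq> {0..1}" using assms by auto
  have "ternary_series b = (\<Sum>j. 2 * b (Suc j) / 3 ^ Suc (Suc j)) + 2 * b 0 / 3"
    unfolding ternary_series_def using suminf_split_head[OF summable_ternary_series[OF assms]] by simp
  also have "(\<Sum>j. 2 * b (Suc j) / 3 ^ Suc (Suc j)) = ternary_series (\<lambda>j. b (Suc j)) / 3"
    unfolding ternary_series_def
    by (subst suminf_divide[symmetric]) (use summable_ternary_series[OF tail] in \<open>auto simp: mult.commute\<close>)
  finally show ?thesis by simp
qed

lemma ternary_series_shift:
  assumes "range b \<subseteq> {0..1}" "range b \<subseteq> \<int>"
  shows "\<exists>N::int. 3 ^ n * ternary_series b = N + ternary_series (\<lambda>j. b (j + n))"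
proof (induction n)
  case (Suc n)
  then obtain N :: int where N: "3 ^ n * ternary_series b = N + ternary_series (\<lambda>j. b (j + n))"
    by blast
  obtain m where m: "b n = of_int m" using assms(2) by (meson Ints_cases rangeI subsetD)
  have "ternary_series (\<lambda>j. b (j + n)) = (2 * b n + ternary_series (\<lambda>j. b (j + Suc n))) / 3"
    using ternary_series_Suc[of "\<lambda>j. b (j + n)"] assms(1) by auto
  then have "3 ^ Suc n * ternary_series b = of_int (3 * N + 2 * m) + ternary_series (\<lambda>j. b (j + Suc n))"
    using N m by (simp add: algebra_simps)
  then show ?case by blast
qed (auto intro: exI[of _ 0])

lemma ternary_series_diff:
  assumes "range b \<subseteq> {0..1}" "range b' \<subseteq> {0..1}" "\<forall>i<j. b i = b' i"
  shows "ternary_series b' - ternary_series b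
           = (ternary_series (\<lambda>i. b' (i + j)) - ternary_series (\<lambda>i. b (i + j))) / 3 ^ j"
  using assms
proof (induction j arbitrary: b b')
  case (Suc j)
  have "ternary_series b' - ternary_series b
          = (ternary_series (\<lambda>i. b' (Suc i)) - ternary_series (\<lambda>i. b (Suc i))) / 3"
    using ternary_series_Suc[OF Suc.prems(1)] ternary_series_Suc[OF Suc.prems(2)] Suc.prems(3)
    by (auto simp: diff_divide_distrib)
  also have "ternary_series (\<lambda>i. b' (Suc i)) - ternary_series (\<lambda>i. b (Suc i))
      = (ternary_series (\<lambda>i. b' (Suc (i + j))) - ternary_series (\<lambda>i. b (Suc (i + j)))) / 3 ^ j"
    using Suc.IH[of "\<lambda>i. b (Suc i)" "\<lambda>i. b' (Suc i)"] Suc.prems by auto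
  finally show ?case by (simp add: field_simps)
qed simp

lemma ternary_series_less:
  assumes "range b \<subseteq> {0..1}" "range b' \<subseteq> {0..1}" "\<forall>i<j. b i = b' i"
    and "b j = 0" "b' j = 1"
  shows "ternary_series b < ternary_series b'"
proof -
  have tails: "range (\<lambda>i. c (i + k)) \<subseteq> {0..1}" if "range c \<subseteq> {0..1}" for c :: "nat \<Rightarrow> real" and k
    using that by auto
  have "ternary_series (\<lambda>i. b (i + j)) \<le> 1 / 3"
    using ternary_series_Suc[OF tails[OF assms(1), of j]] assms(4)
      ternary_series_bounds(2)[OF tails[OF assms(1), of "Suc j"]] by simp
  moreover have "2 / 3 \<le> ternary_series (\<lambda>i. b' (i + j))"
    using ternary_series_Suc[OF tails[OF assms(2), of j]] assms(5)
      ternary_series_bounds(1)[OF tails[OF assms(2), of "Suc j"]] by simp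
  ultimately have "0 < (ternary_series (\<lambda>i. b' (i + j)) - ternary_series (\<lambda>i. b (i + j))) / 3 ^ j"
    by simp
  then show ?thesis
    using ternary_series_diff[OF assms(1-3)] by simp
qed

definition binary_digit :: "real \<Rightarrow> nat \<Rightarrow> real" where
  "binary_digit u j = of_int (\<lfloor>2 ^ Suc j * u\<rfloor> - 2 * \<lfloor>2 ^ j * u\<rfloor>)"

lemma floor_double_cases: "\<lfloor>2 * x\<rfloor> = 2 * \<lfloor>x\<rfloor> \<or> \<lfloor>2 * x\<rfloor> = 2 * \<lfloor>x\<rfloor> + 1" for x :: real
proof -
  have "2 * \<lfloor>x\<rfloor> \<le> \<lfloor>2 * x\<rfloor>"
    unfolding le_floor_iff using of_int_floor_le[of x] by simp
  moreover have "\<lfloor>2 * x\<rfloor> < 2 * \<lfloor>x\<rfloor> + 2"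
    unfolding floor_less_iff using real_of_int_floor_add_one_gt[of x] by simp linarith
  ultimately show ?thesis by linarith
qed

lemma binary_digit_cases: "binary_digit u j = 0 \<or> binary_digit u j = 1"
  using floor_double_cases[of "2 ^ j * u"] unfolding binary_digit_def by (auto simp: mult.assoc)

lemma range_binary_digit: "range (binary_digit u) \<subseteq> {0..1}"
  and range_binary_digit_Ints: "range (binary_digit u) \<subseteq> \<int>"
proof -
  show "range (binary_digit u) \<subseteq> {0..1}"
    using binary_digit_cases[of u] by (metis atLeastAtMost_iff image_subset_iff order_refl zero_le_one)
  show "range (binary_digit u) \<subseteq> \<int>" by (auto simp: binary_digit_def)
qed

lemma binary_digit_first_difference:
  assumes "0 \<le> u" "u < v" "v < 1"
  obtains j where "\<forall>i<j. binary_digit u i = binary_digit v i"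
    and "binary_digit u j = 0" and "binary_digit v j = 1"
proof -
  let ?F = "\<lambda>k w. \<lfloor>2 ^ k * w\<rfloor>"
  obtain n :: nat where "1 / (v - u) < 2 ^ n" using real_arch_pow[of 2 "1 / (v - u)"] by auto
  then have "1 < 2 ^ n * (v - u)" using assms by (simp add: field_simps)
  then have "?F n u \<noteq> ?F n v" by (simp add: algebra_simps) linarith
  define k where "k = (LEAST k. ?F k u \<noteq> ?F k v)"
  have k: "?F k u \<noteq> ?F k v" unfolding k_def by (rule LeastI) fact
  have below: "?F i u = ?F i v" if "i < k" for i using that not_less_Least unfolding k_def by blast
  have "?F 0 u = 0" "?F 0 v = 0" using assms by (simp_all add: floor_eq_iff)
  then obtain j where j: "k = Suc j" using k by (cases k) auto
  have "?F (Suc j) u \<le> ?F (Suc j) v"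
    using assms by (intro floor_mono mult_left_mono) auto
  with k j have less: "?F (Suc j) u < ?F (Suc j) v" by simp
  have double: "?F (Suc j) w = 2 * ?F j w \<or> ?F (Suc j) w = 2 * ?F j w + 1" for w :: real
    using floor_double_cases[of "2 ^ j * w"] by (simp add: mult.assoc)
  have "?F (Suc j) u = 2 * ?F j u \<and> ?F (Suc j) v = 2 * ?F j u + 1"
    using double[of u] double[of v] below[of j] less j by (elim disjE; linarith)
  then have "binary_digit u j = 0" "binary_digit v j = 1"
    using below[of j] j unfolding binary_digit_def by simp_all
  moreover have "binary_digit u i = binary_digit v i" if "i < j" for i
    using below[of i] below[of "Suc i"] j that unfolding binary_digit_def by simp
  ultimately show thesis by (intro that) auto
qed

text \<open>The inverse of the Cantor function: binary digits become the ternary digits 0 and 2.\<close>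
definition cantor_map :: "real \<Rightarrow> real" where
  "cantor_map u = ternary_series (binary_digit u)"

lemma cantor_map_strict_mono: "strict_mono_on {0..<1} cantor_map"
proof (rule strict_mono_onI)
  fix u v :: real assume "u \<in> {0..<1}" "v \<in> {0..<1}" "u < v"
  then obtain j where "\<forall>i<j. binary_digit u i = binary_digit v i"
    and "binary_digit u j = 0" and "binary_digit v j = 1"
    by (auto elim: binary_digit_first_difference)
  then show "cantor_map u < cantor_map v"
    unfolding cantor_map_def by (intro ternary_series_less range_binary_digit)
qed

lemma cantor_map_measurable [measurable]: "cantor_map \<in> borel_measurable borel"
  unfolding cantor_map_def ternary_series_def binary_digit_def by measurable

lemma cantor_map_times_pow3:
  obtains N :: int and R :: real where "3 ^ n * cantor_map u = of_int N + R" and "R \<in> {0..1/3} \<union> {2/3..1}"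
proof -
  let ?R = "ternary_series (\<lambda>j. binary_digit u (j + n))"
  obtain N :: int where "3 ^ n * cantor_map u = N + ?R"
    using ternary_series_shift[OF range_binary_digit range_binary_digit_Ints] unfolding cantor_map_def by blast
  moreover have "?R = (2 * binary_digit u n + ternary_series (\<lambda>j. binary_digit u (j + Suc n))) / 3"
    using ternary_series_Suc[of "\<lambda>j. binary_digit u (j + n)"] range_binary_digit[of u] by auto
  moreover have "ternary_series (\<lambda>j. binary_digit u (j + Suc n)) \<in> {0..1}"
    using ternary_series_bounds[of "\<lambda>j. binary_digit u (j + Suc n)"] range_binary_digit[of u] by auto
  ultimately show thesis
    using binary_digit_cases[of u n] by (intro that[of N ?R]) auto
qed

section \<open>Lebesgue measure on the unit interval and Wiener's lemma\<close>

definition lborel_01 :: "real measure" where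
  "lborel_01 = density lborel (\<lambda>x. ennreal (indicator {0<..<1} x))"

lemma sets_lborel_01 [simp, measurable_cong]: "sets lborel_01 = sets borel"
  and space_lborel_01 [simp]: "space lborel_01 = UNIV"
  by (simp_all add: lborel_01_def)

lemma measurable_lborel_01 [simp]:
  "measurable lborel_01 N = measurable borel N" "measurable N lborel_01 = measurable N borel"
  by (rule measurable_cong_sets; simp)+

lemma emeasure_lborel_01_UNIV: "emeasure lborel_01 UNIV = 1"
  by (simp add: lborel_01_def emeasure_density ennreal_indicator)

lemma measure_lborel_01_UNIV [simp]: "measure lborel_01 UNIV = 1"
  by (simp add: measure_def emeasure_lborel_01_UNIV)

interpretation lborel_01: finite_measure lborel_01
  by (rule finite_measureI) (simp add: emeasure_lborel_01_UNIV)

lemma AE_lborel_01: "AE x in lborel_01. x \<in> {0<..<1}"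
  unfolding lborel_01_def by (subst AE_density) (auto simp: indicator_def)

lemma abs_integral_lborel_01_le:
  fixes f :: "real \<Rightarrow> real"
  assumes "f \<in> borel_measurable borel" "\<And>x. \<bar>f x\<bar> \<le> B"
  shows "\<bar>\<integral>x. f x \<partial>lborel_01\<bar> \<le> B"
proof -
  have "0 \<le> B" using assms(2)[of 0] by linarith
  then have "\<bar>\<integral>x. f x \<partial>lborel_01\<bar> \<le> (\<integral>x. B \<partial>lborel_01)"
    using assms by (intro integral_abs_bound_integral lborel_01.integrable_const_bound[where B=B]) auto
  then show ?thesis by simp
qed

lemma integral_Ioo_eq_lborel_01:
  fixes f :: "real \<Rightarrow> real"
  assumes f [measurable]: "f \<in> borel_measurable borel" and bound: "\<And>x. \<bar>f x\<bar> \<le> B"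
  shows "integral {0<..<1} f = (\<integral>x. f x \<partial>lborel_01)"
proof -
  have "integrable lborel_01 f"
    using bound by (intro lborel_01.integrable_const_bound[where B=B]) auto
  then have si: "set_integrable lborel {0<..<1} f"
    unfolding set_integrable_def lborel_01_def by (subst (asm) integrable_density) auto
  moreover have "(\<integral>x. f x \<partial>lborel_01) = (\<integral>x. indicator {0<..<1} x *\<^sub>R f x \<partial>lborel)"
    unfolding lborel_01_def by (rule integral_density) auto
  ultimately show ?thesis
    using set_borel_integral_eq_integral(2)[OF si] unfolding set_lebesgue_integral_def by simp
qed

lemma AE_lborel_01_pair_inj:
  fixes g :: "real \<Rightarrow> real"
  assumes [measurable]: "g \<in> borel_measurable borel" and "inj_on g {0<..<1}"
  shows "AE p in lborel_01 \<Otimes>\<^sub>M lborel_01. g (fst p) \<noteq> g (snd p)"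
proof -
  interpret pair_sigma_finite lborel_01 lborel_01 ..
  have neq: "AE y in lborel_01. y \<noteq> x" for x
    unfolding lborel_01_def by (subst AE_density) (auto intro: AE_mp[OF AE_lborel_singleton[of x]])
  have inner: "AE y in lborel_01. g x \<noteq> g y" if "x \<in> {0<..<1}" for x
    using AE_lborel_01 neq[of x] by eventually_elim (use that assms(2) in \<open>auto simp: inj_on_def\<close>)
  show ?thesis
  proof (rule AE_pair_measure)
    show "{p \<in> space (lborel_01 \<Otimes>\<^sub>M lborel_01). g (fst p) \<noteq> g (snd p)} \<in> sets (lborel_01 \<Otimes>\<^sub>M lborel_01)"
      by measurable
    show "AE x in lborel_01. AE y in lborel_01. g (fst (x, y)) \<noteq> g (snd (x, y))"
      using AE_lborel_01 by eventually_elim (simp add: inner)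
  qed
qed

definition cesaro_mean :: "(real \<Rightarrow> real) \<Rightarrow> real \<Rightarrow> real" where
  "cesaro_mean h T = (\<integral>t. indicator {0..T} t * h t \<partial>lborel) / T"

lemma cesaro_mean_cos:
  assumes "s \<noteq> 0" "0 < T"
  shows "cesaro_mean (\<lambda>t. cos (2*pi*t * s)) T = sin (2*pi*T * s) / (2*pi * s*T)"
proof -
  have "(\<integral>t. indicator {0..T} t *\<^sub>R cos (2*pi*t * s) \<partial>lborel)
          = sin (2*pi*T * s) / (2*pi * s) - sin (2*pi*0 * s) / (2*pi * s)"
  proof (rule integral_FTC_atLeastAtMost)
    fix x :: real
    have "((\<lambda>t. sin (2*pi*t * s) / (2*pi * s)) has_real_derivative cos (2*pi*x * s)) (at x within {0..T})"
      using assms by (auto intro!: derivative_eq_intros simp: field_simps)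
    then show "((\<lambda>t. sin (2*pi*t * s) / (2*pi * s)) has_vector_derivative cos (2*pi*x * s)) (at x within {0..T})"
      unfolding has_real_derivative_iff_has_vector_derivative .
  qed (use assms in \<open>auto intro!: continuous_intros\<close>)
  then show ?thesis
    using assms by (simp add: cesaro_mean_def)
qed

lemma abs_cesaro_mean_cos_le:
  assumes "s \<noteq> 0" "0 < T"
  shows "\<bar>cesaro_mean (\<lambda>t. cos (2*pi*t * s)) T\<bar> \<le> 1"
    and "\<bar>cesaro_mean (\<lambda>t. cos (2*pi*t * s)) T\<bar> \<le> 1 / (2*pi*\<bar>s\<bar>*T)"
proof -
  have pos: "0 < \<bar>2*pi * s*T\<bar>" using assms by simp
  have "\<bar>sin (2*pi*T * s)\<bar> \<le> \<bar>2*pi * s*T\<bar>"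
    using abs_sin_x_le_abs_x[of "2*pi*T * s"] by (simp add: mult_ac)
  then show "\<bar>cesaro_mean (\<lambda>t. cos (2*pi*t * s)) T\<bar> \<le> 1"
    using pos by (simp add: cesaro_mean_cos[OF assms] abs_divide)
  have "\<bar>sin (2*pi*T * s)\<bar> / \<bar>2*pi * s*T\<bar> \<le> 1 / \<bar>2*pi * s*T\<bar>"
    using pos by (simp add: divide_right_mono)
  then show "\<bar>cesaro_mean (\<lambda>t. cos (2*pi*t * s)) T\<bar> \<le> 1 / (2*pi*\<bar>s\<bar>*T)"
    unfolding cesaro_mean_cos[OF assms] abs_divide using assms by (simp add: abs_mult)
qed

lemma cesaro_mean_cos_tendsto_0:
  assumes "s \<noteq> 0"
  shows "(cesaro_mean (\<lambda>t. cos (2*pi*t * s)) \<longlongrightarrow> 0) at_top"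
proof (rule Lim_null_comparison)
  show "\<forall>\<^sub>F T in at_top. norm (cesaro_mean (\<lambda>t. cos (2*pi*t * s)) T) \<le> inverse (2*pi*\<bar>s\<bar>) * inverse T"
    using eventually_gt_at_top[of 0]
    by eventually_elim (use abs_cesaro_mean_cos_le(2)[OF assms] in \<open>simp add: field_simps\<close>)
  show "((\<lambda>T. inverse (2*pi*\<bar>s\<bar>) * inverse T) \<longlongrightarrow> 0) at_top"
    using tendsto_mult_right_zero[OF tendsto_inverse_0_at_top[OF filterlim_ident]] .
qed

lemma (in finite_measure) cesaro_mean_integral_swap:
  fixes f :: "real \<Rightarrow> 'a \<Rightarrow> real"
  assumes [measurable]: "case_prod f \<in> borel_measurable (lborel \<Otimes>\<^sub>M M)"
    and bound: "\<And>t x. \<bar>f t x\<bar> \<le> B"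
  shows "cesaro_mean (\<lambda>t. \<integral>x. f t x \<partial>M) T = (\<integral>x. cesaro_mean (\<lambda>t. f t x) T \<partial>M)"
proof -
  have box: "emeasure (lborel \<Otimes>\<^sub>M M) ({0..T} \<times> space M) = emeasure lborel {0..T} * emeasure M (space M)"
    by (rule emeasure_pair_measure_Times) auto
  have "{0..T} \<times> space M \<in> sets (lborel \<Otimes>\<^sub>M M)"
    by (intro pair_measureI) auto
  then have "integrable (lborel \<Otimes>\<^sub>M M) (indicator ({0..T} \<times> space M) :: _ \<Rightarrow> real)"
    unfolding integrable_indicator_iff using box
    by (simp add: space_pair_measure Times_Int_Times ennreal_mult_eq_top_iff less_top[symmetric] emeasure_lborel_Icc_eq)
  then have dom: "integrable (lborel \<Otimes>\<^sub>M M) (\<lambda>p. B * indicator ({0..T} \<times> space M) p)"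
    by simp
  have "0 \<le> B" using bound[of 0] by (meson abs_ge_zero order_trans)
  then have int: "integrable (lborel \<Otimes>\<^sub>M M) (\<lambda>(t, x). indicator {0..T} t * f t x)"
    by (intro Bochner_Integration.integrable_bound[OF dom])
      (auto intro!: AE_I2 simp: space_pair_measure indicator_def bound)
  interpret pair_sigma_finite lborel M ..
  have "(\<integral>x. \<integral>t. indicator {0..T} t * f t x \<partial>lborel \<partial>M)
      = (\<integral>t. \<integral>x. indicator {0..T} t * f t x \<partial>M \<partial>lborel)"
    using int by (rule Fubini_integral)
  then show ?thesis
    unfolding cesaro_mean_def by simp
qed

lemma (in finite_measure) fourier_sq_eq_pair_integral:
  fixes g :: "'a \<Rightarrow> real"
  assumes [measurable]: "g \<in> borel_measurable M"
  shows "(\<integral>u. cos (2*pi*t*g u) \<partial>M)\<^sup>2 + (\<integral>u. sin (2*pi*t*g u) \<partial>M)\<^sup>2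
           = (\<integral>p. cos (2*pi*t*(g (fst p) - g (snd p))) \<partial>(M \<Otimes>\<^sub>M M))"
proof -
  interpret pair_sigma_finite M M ..
  interpret MM: finite_measure "M \<Otimes>\<^sub>M M"
    by (intro finite_measure_pair_measure finite_measure_axioms)
  define a where "a u = 2*pi*t*g u" for u
  have [measurable]: "a \<in> borel_measurable M" unfolding a_def by measurable
  define C where "C = (\<integral>u. cos (a u) \<partial>M)"
  define S where "S = (\<integral>u. sin (a u) \<partial>M)"
  have int_cos: "integrable M (\<lambda>u. cos (a u) * c)" and int_sin: "integrable M (\<lambda>u. sin (a u) * c)" for c
    by (intro integrable_const_bound[where B="\<bar>c\<bar>"] AE_I2; simp add: abs_mult mult_left_le_one_le)+
  have "C\<^sup>2 + S\<^sup>2 = (\<integral>u. cos (a u) * C \<partial>M) + (\<integral>u. sin (a u) * S \<partial>M)"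
    by (simp add: C_def S_def power2_eq_square)
  also have "\<dots> = (\<integral>u. cos (a u) * C + sin (a u) * S \<partial>M)"
    using int_cos int_sin by simp
  also have "\<dots> = (\<integral>u. (\<integral>v. cos (a u - a v) \<partial>M) \<partial>M)"
  proof (rule Bochner_Integration.integral_cong[OF refl])
    fix u
    have "(\<integral>v. cos (a u - a v) \<partial>M) = (\<integral>v. cos (a v) * cos (a u) + sin (a v) * sin (a u) \<partial>M)"
      by (simp add: cos_diff mult_ac)
    also have "\<dots> = cos (a u) * C + sin (a u) * S"
      using int_cos int_sin by (simp add: C_def S_def mult_ac)
    finally show "cos (a u) * C + sin (a u) * S = (\<integral>v. cos (a u - a v) \<partial>M)" by simp
  qed
  also have "\<dots> = (\<integral>p. (\<lambda>(u, v). cos (a u - a v)) p \<partial>(M \<Otimes>\<^sub>M M))"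
    by (rule integral_fst) (auto intro!: MM.integrable_const_bound[where B=1])
  finally show ?thesis
    by (simp add: C_def S_def a_def right_diff_distrib case_prod_beta')
qed

text \<open>Wiener's lemma; the hypothesis says that the image of \<open>M\<close> under \<open>g\<close> has no atoms.\<close>
theorem (in finite_measure) cesaro_mean_fourier_sq_tendsto_0:
  fixes g :: "'a \<Rightarrow> real"
  assumes [measurable]: "g \<in> borel_measurable M"
    and separated: "AE p in M \<Otimes>\<^sub>M M. g (fst p) \<noteq> g (snd p)"
  shows "(cesaro_mean (\<lambda>t. (\<integral>u. cos (2*pi*t*g u) \<partial>M)\<^sup>2 + (\<integral>u. sin (2*pi*t*g u) \<partial>M)\<^sup>2)
           \<longlongrightarrow> 0) at_top"
proof -
  interpret MM: finite_measure "M \<Otimes>\<^sub>M M"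
    by (intro finite_measure_pair_measure finite_measure_axioms)
  let ?s = "\<lambda>p. g (fst p) - g (snd p)"
  have swap: "cesaro_mean (\<lambda>t. (\<integral>u. cos (2*pi*t*g u) \<partial>M)\<^sup>2 + (\<integral>u. sin (2*pi*t*g u) \<partial>M)\<^sup>2) T
      = (\<integral>p. cesaro_mean (\<lambda>t. cos (2*pi*t*?s p)) T \<partial>(M \<Otimes>\<^sub>M M))" for T
    unfolding fourier_sq_eq_pair_integral[OF assms(1)]
    by (rule MM.cesaro_mean_integral_swap[where B=1]) auto
  have "((\<lambda>T. \<integral>p. cesaro_mean (\<lambda>t. cos (2*pi*t*?s p)) T \<partial>(M \<Otimes>\<^sub>M M))
          \<longlongrightarrow> (\<integral>p. 0 \<partial>(M \<Otimes>\<^sub>M M))) at_top"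
  proof (rule integral_dominated_convergence_at_top[where w="\<lambda>_. 1"])
    show "AE p in M \<Otimes>\<^sub>M M. ((\<lambda>T. cesaro_mean (\<lambda>t. cos (2*pi*t*?s p)) T) \<longlongrightarrow> 0) at_top"
      using separated by eventually_elim (simp add: cesaro_mean_cos_tendsto_0)
    show "\<forall>\<^sub>F T in at_top. AE p in M \<Otimes>\<^sub>M M. norm (cesaro_mean (\<lambda>t. cos (2*pi*t*?s p)) T) \<le> 1"
      using eventually_gt_at_top[of 0]
    proof eventually_elim
      case (elim T)
      show ?case
        using separated by eventually_elim (use elim in \<open>simp add: abs_cesaro_mean_cos_le(1)\<close>)
    qed
  qed (auto simp: cesaro_mean_def)
  then show ?thesis
    unfolding swap by simp
qed

section \<open>Sets of density one\<close>

definition has_density_one :: "real set \<Rightarrow> bool" where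
  "has_density_one A \<longleftrightarrow> ((\<lambda>T. measure lebesgue (A \<inter> {0..T}) / T) \<longlongrightarrow> 1) at_top"

lemma has_density_one_if_complement_sparse:
  assumes A: "A \<in> sets borel"
    and sparse: "\<And>K::nat. \<forall>\<^sub>F T in at_top. measure lborel ({0..T} - A) \<le> T / (real K + 1)"
  shows "has_density_one A"
  unfolding has_density_one_def
proof (rule tendstoI)
  fix e :: real assume "0 < e"
  then obtain K :: nat where K: "1 / (real K + 1) < e"
    by (metis nat_approx_posE of_nat_Suc add.commute)
  show "\<forall>\<^sub>F T in at_top. dist (measure lebesgue (A \<inter> {0..T}) / T) 1 < e"
    using sparse[of K] eventually_gt_at_top[of 0]
  proof eventually_elim
    case (elim T)
    have "measure lborel ({0..T} - A \<inter> {0..T}) = measure lborel {0..T} - measure lborel (A \<inter> {0..T})"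
      using A by (intro measure_Diff) (auto simp: emeasure_lborel_Icc_eq)
    moreover have "{0..T} - A \<inter> {0..T} = {0..T} - A" by auto
    ultimately have "measure lborel (A \<inter> {0..T}) = T - measure lborel ({0..T} - A)"
      using elim(2) by simp
    then have "measure lborel (A \<inter> {0..T}) / T - 1 = - (measure lborel ({0..T} - A) / T)"
      using elim(2) by (simp add: diff_divide_distrib)
    moreover have "measure lborel ({0..T} - A) / T \<le> 1 / (real K + 1)"
      using divide_right_mono[OF elim(1), of T] elim(2) by simp
    ultimately have "\<bar>measure lborel (A \<inter> {0..T}) / T - 1\<bar> \<le> 1 / (real K + 1)"
      using elim(2) by simp
    then show ?case
      using K A by (simp add: dist_real_def measure_completion)
  qed
qed

lemma strict_mono_locate:
  fixes S :: "nat \<Rightarrow> real"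
  assumes "strict_mono S" "\<And>m. real m \<le> S m" "S j \<le> t"
  obtains m where "S m \<le> t" "t < S (Suc m)" "\<And>k. S k \<le> t \<Longrightarrow> k \<le> m"
proof -
  have "S 0 \<le> t" using strict_mono_leD[OF assms(1), of 0 j] assms(3) by simp
  obtain n :: nat where "t < real n" using reals_Archimedean2 by blast
  then have ex: "\<exists>m. t < S m" using assms(2) by (meson less_le_trans)
  define m where "m = (LEAST m. t < S m) - 1"
  have "t < S (LEAST m. t < S m)" by (rule LeastI_ex[OF ex])
  moreover have "(LEAST m. t < S m) \<noteq> 0" using \<open>S 0 \<le> t\<close> by (metis LeastI_ex[OF ex] not_less)
  ultimately have "S m \<le> t" "t < S (Suc m)"
    unfolding m_def using not_less_Least[of "m" "\<lambda>m. t < S m"] by (simp_all add: m_def)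
  moreover have "k \<le> m" if "S k \<le> t" for k
    using \<open>t < S (Suc m)\<close> that strict_mono_less_eq[OF assms(1), of "Suc m" k] by linarith
  ultimately show thesis by (rule that)
qed

lemma strict_mono_dominating:
  fixes T :: "nat \<Rightarrow> real"
  obtains S where "strict_mono S" "\<And>m. real m \<le> S m" "\<And>m. T m \<le> S m"
proof
  define S where "S = rec_nat (max 0 (T 0)) (\<lambda>m x. max (x + 1) (T (Suc m)))"
  have S_Suc: "S (Suc m) = max (S m + 1) (T (Suc m))" for m
    by (simp add: S_def)
  show "strict_mono S" by (rule strict_monoI_Suc) (simp add: S_Suc)
  show "real m \<le> S m" for m by (induction m) (auto simp: S_def)
  show "T m \<le> S m" for m by (cases m) (simp_all add: S_def)
qed

definition avoiding_blocks :: "(nat \<Rightarrow> real) \<Rightarrow> (nat \<Rightarrow> real set) \<Rightarrow> real set" where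
  "avoiding_blocks S B = {0..} - (\<Union>m. {S m..<S (Suc m)} \<inter> B m)"

lemma avoiding_blocks_measurable [measurable]:
  assumes [measurable]: "\<And>m. B m \<in> sets borel"
  shows "avoiding_blocks S B \<in> sets borel"
  unfolding avoiding_blocks_def by measurable

lemma avoiding_blocks_avoids:
  assumes S: "strict_mono S" "\<And>m. real m \<le> S m" and incr: "\<And>m m'. m \<le> m' \<Longrightarrow> B m \<subseteq> B m'"
    and "t \<in> avoiding_blocks S B" "S k \<le> t"
  shows "t \<notin> B k"
proof -
  obtain m where m: "S m \<le> t" "t < S (Suc m)" "\<And>j. S j \<le> t \<Longrightarrow> j \<le> m"
    using strict_mono_locate[OF S \<open>S k \<le> t\<close>] by blast
  then have "t \<notin> B m" using assms(4) unfolding avoiding_blocks_def by auto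
  then show ?thesis using incr[OF m(3)[OF \<open>S k \<le> t\<close>]] by blast
qed

lemma avoiding_blocks_complement:
  assumes incr: "\<And>m m'. m \<le> m' \<Longrightarrow> B m \<subseteq> B m'" and m: "\<And>k. S k \<le> T \<Longrightarrow> k \<le> m"
  shows "{0..T} - avoiding_blocks S B \<subseteq> B m \<inter> {0..T}"
proof
  fix t assume t: "t \<in> {0..T} - avoiding_blocks S B"
  then obtain k where k: "S k \<le> t" "t \<in> B k" unfolding avoiding_blocks_def by auto
  then have "k \<le> m" using m t by (meson DiffD1 atLeastAtMost_iff order_trans)
  then show "t \<in> B m \<inter> {0..T}" using incr[of k m] k t by blast
qed

lemma density_one_set_eventually_avoiding:
  fixes B :: "nat \<Rightarrow> real set"
  assumes [measurable]: "\<And>m. B m \<in> sets borel" and incr: "\<And>m m'. m \<le> m' \<Longrightarrow> B m \<subseteq> B m'"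
    and sparse: "\<And>m. \<forall>\<^sub>F T in at_top. measure lborel (B m \<inter> {0..T}) \<le> T / (real m + 1)"
  obtains A where "A \<subseteq> {0..}" "A \<in> sets borel" "has_density_one A"
    "\<And>m. \<forall>\<^sub>F t in at_top. t \<in> A \<longrightarrow> t \<notin> B m"
proof -
  obtain T0 where T0: "\<And>m T. T0 m \<le> T \<Longrightarrow> measure lborel (B m \<inter> {0..T}) \<le> T / (real m + 1)"
    using sparse unfolding eventually_at_top_linorder by metis
  obtain S where S: "strict_mono S" "\<And>m. real m \<le> S m" "\<And>m. T0 m \<le> S m"
    using strict_mono_dominating[of T0] by blast
  let ?A = "avoiding_blocks S B"
  have "has_density_one ?A"
  proof (rule has_density_one_if_complement_sparse)
    fix K :: nat
    show "\<forall>\<^sub>F T in at_top. measure lborel ({0..T} - ?A) \<le> T / (real K + 1)"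
      using eventually_ge_at_top[of "S K"]
    proof eventually_elim
      case (elim T)
      obtain m where m: "S m \<le> T" "\<And>k. S k \<le> T \<Longrightarrow> k \<le> m"
        using strict_mono_locate[OF S(1,2) elim] by blast
      have "{0..T} \<inter> B m \<in> fmeasurable lborel"
        by (intro fmeasurable_Int_fmeasurable) (simp_all add: fmeasurable_def emeasure_lborel_Icc_eq)
      then have "measure lborel ({0..T} - ?A) \<le> measure lborel (B m \<inter> {0..T})"
        using avoiding_blocks_complement[where B=B and S=S and T=T and m=m, OF incr m(2)]
        by (intro measure_mono_fmeasurable) (auto simp: Int_commute)
      also have "\<dots> \<le> T / (real m + 1)"
        using T0 S(3)[of m] m(1) by simp
      also have "\<dots> \<le> T / (real K + 1)"
        using m(2)[OF elim] S(2)[of K] elim by (simp add: frac_le)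
      finally show ?case .
    qed
  qed simp
  moreover have "\<forall>\<^sub>F t in at_top. t \<in> ?A \<longrightarrow> t \<notin> B m" for m
    using eventually_ge_at_top[of "S m"]
    by eventually_elim (use avoiding_blocks_avoids[where B=B, OF S(1,2) incr] in blast)
  moreover have "?A \<subseteq> {0..}" unfolding avoiding_blocks_def by blast
  ultimately show thesis using that[of ?A] by simp
qed

lemma measure_superlevel_le_cesaro_mean:
  fixes h :: "real \<Rightarrow> real"
  assumes [measurable]: "h \<in> borel_measurable borel" and bounds: "\<And>t. h t \<in> {0..1}"
    and "0 < c" "0 < T"
  shows "measure lborel {t \<in> {0..T}. c \<le> h t} \<le> T * cesaro_mean h T / c"
proof -
  have "integrable lborel (\<lambda>t. indicator {0..T} t * h t)"
  proof (rule Bochner_Integration.integrable_bound)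
    show "integrable lborel (indicator {0..T} :: real \<Rightarrow> real)"
      by (simp add: emeasure_lborel_Icc_eq)
  qed (use bounds in \<open>auto intro!: AE_I2 simp: indicator_def\<close>)
  then have "measure lborel {t \<in> space lborel. c \<le> indicator {0..T} t * h t}
               \<le> (\<integral>t. indicator {0..T} t * h t \<partial>lborel) / c"
    using assms bounds by (intro integral_Markov_inequality_measure[where A=UNIV]) auto
  moreover have "{t \<in> space lborel. c \<le> indicator {0..T} t * h t} = {t \<in> {0..T}. c \<le> h t}"
    using \<open>0 < c\<close> by (auto simp: indicator_def)
  ultimately show ?thesis
    using \<open>0 < T\<close> by (simp add: cesaro_mean_def)
qed

lemma eventually_measure_superlevel_le:
  fixes h :: "nat \<Rightarrow> real \<Rightarrow> real"
  assumes [measurable]: "\<And>n. h n \<in> borel_measurable borel"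
    and bounds: "\<And>n t. h n t \<in> {0..1}"
    and cesaro: "\<And>n. (cesaro_mean (h n) \<longlongrightarrow> 0) at_top" and "0 < c"
  shows "\<forall>\<^sub>F T in at_top. measure lborel {t \<in> {0..T}. \<exists>n\<le>m. c \<le> h n t} \<le> c * T"
proof -
  have "((\<lambda>T. \<Sum>n\<le>m. cesaro_mean (h n) T) \<longlongrightarrow> (\<Sum>n\<le>m. 0)) at_top"
    by (intro tendsto_sum cesaro)
  then have "\<forall>\<^sub>F T in at_top. (\<Sum>n\<le>m. cesaro_mean (h n) T) < c * c"
    using \<open>0 < c\<close> by (intro order_tendstoD(2)) auto
  then show ?thesis
    using eventually_gt_at_top[of 0]
  proof eventually_elim
    case (elim T)
    have "{t \<in> {0..T}. \<exists>n\<le>m. c \<le> h n t} = (\<Union>n\<le>m. {t \<in> {0..T}. c \<le> h n t})"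
      by auto
    then have "measure lborel {t \<in> {0..T}. \<exists>n\<le>m. c \<le> h n t}
        \<le> (\<Sum>n\<le>m. measure lborel {t \<in> {0..T}. c \<le> h n t})"
      by (simp add: measure_UNION_le)
    also have "\<dots> \<le> (\<Sum>n\<le>m. T * cesaro_mean (h n) T / c)"
      using elim(2) \<open>0 < c\<close> bounds by (intro sum_mono measure_superlevel_le_cesaro_mean) auto
    also have "\<dots> = T * (\<Sum>n\<le>m. cesaro_mean (h n) T) / c"
      by (simp add: sum_divide_distrib sum_distrib_left)
    also have "\<dots> \<le> c * T"
      using elim \<open>0 < c\<close> by (simp add: divide_le_eq mult.commute)
    finally show ?case .
  qed
qed

lemma tendsto_0_within_if_eventually_less:
  fixes h :: "real \<Rightarrow> real"
  assumes "\<And>t. 0 \<le> h t" and "\<And>m::nat. \<forall>\<^sub>F t in at_top. t \<in> A \<longrightarrow> h t < 1 / (real m + 1)"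
  shows "(h \<longlongrightarrow> 0) (inf at_top (principal A))"
proof (rule tendstoI)
  fix e :: real assume "0 < e"
  then obtain m where m: "1 / real (Suc m) < e" by (rule nat_approx_posE)
  show "\<forall>\<^sub>F t in inf at_top (principal A). dist (h t) 0 < e"
    unfolding eventually_inf_principal
    using assms(2)[of m] by eventually_elim (use assms(1) m in \<open>auto simp: add.commute\<close>)
qed

theorem density_one_set_tendsto_0:
  fixes h :: "'i::countable \<Rightarrow> real \<Rightarrow> real"
  assumes [measurable]: "\<And>i. h i \<in> borel_measurable borel"
    and bounds: "\<And>i t. h i t \<in> {0..1}"
    and cesaro: "\<And>i. (cesaro_mean (h i) \<longlongrightarrow> 0) at_top"
  obtains A where "A \<subseteq> {0..}" "A \<in> sets borel" "has_density_one A"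
    "\<And>i. (h i \<longlongrightarrow> 0) (inf at_top (principal A))"
proof -
  define c where "c m = 1 / (real m + 1)" for m :: nat
  have c_pos: "0 < c m" for m by (simp add: c_def)
  define B where "B m = {t. 0 \<le> t \<and> (\<exists>n\<le>m. c m \<le> h (from_nat n) t)}" for m
  have B_meas [measurable]: "B m \<in> sets borel" for m
    unfolding B_def by measurable
  have incr: "B m \<subseteq> B m'" if "m \<le> m'" for m m'
  proof -
    have "c m' \<le> c m" using that by (simp add: c_def frac_le)
    then show ?thesis using that unfolding B_def by (blast intro: order_trans le_trans)
  qed
  have "B m \<inter> {0..T} = {t \<in> {0..T}. \<exists>n\<le>m. c m \<le> h (from_nat n) t}" for m T
    by (auto simp: B_def)
  then have sparse: "\<forall>\<^sub>F T in at_top. measure lborel (B m \<inter> {0..T}) \<le> T / (real m + 1)" for m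
    using eventually_measure_superlevel_le[of "\<lambda>n. h (from_nat n)", OF _ bounds cesaro c_pos]
    by (simp add: c_def)
  obtain A where A: "A \<subseteq> {0..}" "A \<in> sets borel" "has_density_one A"
    and avoid: "\<And>m. \<forall>\<^sub>F t in at_top. t \<in> A \<longrightarrow> t \<notin> B m"
    using density_one_set_eventually_avoiding[of B, OF B_meas incr sparse] by blast
  have "\<forall>\<^sub>F t in at_top. t \<in> A \<longrightarrow> h i t < 1 / (real m + 1)" for i m
  proof -
    let ?m = "max m (to_nat i)"
    have c_le: "c ?m \<le> c m" by (simp add: c_def frac_le)
    from avoid[of ?m] eventually_ge_at_top[of 0] show ?thesis
    proof eventually_elim
      case (elim t)
      show ?case
      proof
        assume "t \<in> A"
        with elim(1) have "t \<notin> B ?m" by blast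
        moreover have "to_nat i \<le> ?m" by simp
        ultimately have "\<not> c ?m \<le> h (from_nat (to_nat i)) t" using elim(2) unfolding B_def by blast
        then show "h i t < 1 / (real m + 1)" using c_le by (simp add: c_def)
      qed
    qed
  qed
  then have "(h i \<longlongrightarrow> 0) (inf at_top (principal A))" for i
    using bounds by (intro tendsto_0_within_if_eventually_less) auto
  with A show thesis by (rule that)
qed

section \<open>Trigonometric polynomials and Haar measure on the torus\<close>

definition torus_phase :: "int \<Rightarrow> int \<Rightarrow> real^2 \<Rightarrow> real" where
  "torus_phase a b x = of_int a * x$1 + of_int b * x$2"

definition torus_cos :: "int \<Rightarrow> int \<Rightarrow> real^2 \<Rightarrow> real" where
  "torus_cos a b x = cos (2*pi * torus_phase a b x)"

definition torus_sin :: "int \<Rightarrow> int \<Rightarrow> real^2 \<Rightarrow> real" where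
  "torus_sin a b x = sin (2*pi * torus_phase a b x)"

lemma torus_phase_add: "torus_phase (a + a') (b + b') x = torus_phase a b x + torus_phase a' b' x"
  and torus_phase_diff: "torus_phase (a - a') (b - b') x = torus_phase a b x - torus_phase a' b' x"
  by (simp_all add: torus_phase_def algebra_simps)

lemma torus_char_products:
  "torus_cos a b x * torus_cos a' b' x = torus_cos (a + a') (b + b') x / 2 + torus_cos (a - a') (b - b') x / 2"
  "torus_sin a b x * torus_sin a' b' x = torus_cos (a - a') (b - b') x / 2 - torus_cos (a + a') (b + b') x / 2"
  "torus_sin a b x * torus_cos a' b' x = torus_sin (a + a') (b + b') x / 2 + torus_sin (a - a') (b - b') x / 2"
  "torus_cos a b x * torus_sin a' b' x = torus_sin (a + a') (b + b') x / 2 - torus_sin (a - a') (b - b') x / 2"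
  by (simp_all add: torus_cos_def torus_sin_def torus_phase_add torus_phase_diff distrib_left right_diff_distrib
      cos_add cos_diff sin_add sin_diff field_simps)

inductive_set trig_poly :: "(real^2 \<Rightarrow> real) set" where
  cos: "torus_cos a b \<in> trig_poly"
| sin: "torus_sin a b \<in> trig_poly"
| add: "f \<in> trig_poly \<Longrightarrow> g \<in> trig_poly \<Longrightarrow> (\<lambda>x. f x + g x) \<in> trig_poly"
| scale: "f \<in> trig_poly \<Longrightarrow> (\<lambda>x. c * f x) \<in> trig_poly"

lemma trig_poly_lincomb:
  "f \<in> trig_poly \<Longrightarrow> g \<in> trig_poly \<Longrightarrow> (\<lambda>x. c * f x + d * g x) \<in> trig_poly"
  by (intro trig_poly.add trig_poly.scale)

lemma trig_poly_const: "(\<lambda>x. c) \<in> trig_poly"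
  using trig_poly.scale[OF trig_poly.cos[of 0 0], of c] by (simp add: torus_cos_def torus_phase_def)

lemma trig_poly_mult_char:
  assumes "g \<in> trig_poly"
  shows "(\<lambda>x. torus_cos a b x * g x) \<in> trig_poly" "(\<lambda>x. torus_sin a b x * g x) \<in> trig_poly"
  using assms
proof (induction g)
  case (cos a' b')
  show "(\<lambda>x. torus_cos a b x * torus_cos a' b' x) \<in> trig_poly"
    using trig_poly_lincomb[OF trig_poly.cos[of "a + a'" "b + b'"] trig_poly.cos[of "a - a'" "b - b'"], of "1/2" "1/2"]
    by (simp add: torus_char_products(1))
  show "(\<lambda>x. torus_sin a b x * torus_cos a' b' x) \<in> trig_poly"
    using trig_poly_lincomb[OF trig_poly.sin[of "a + a'" "b + b'"] trig_poly.sin[of "a - a'" "b - b'"], of "1/2" "1/2"]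
    by (simp add: torus_char_products(3))
next
  case (sin a' b')
  show "(\<lambda>x. torus_cos a b x * torus_sin a' b' x) \<in> trig_poly"
    using trig_poly_lincomb[OF trig_poly.sin[of "a + a'" "b + b'"] trig_poly.sin[of "a - a'" "b - b'"], of "1/2" "-1/2"]
    by (simp add: torus_char_products(4))
  show "(\<lambda>x. torus_sin a b x * torus_sin a' b' x) \<in> trig_poly"
    using trig_poly_lincomb[OF trig_poly.cos[of "a - a'" "b - b'"] trig_poly.cos[of "a + a'" "b + b'"], of "1/2" "-1/2"]
    by (simp add: torus_char_products(2))
next
  case (add f g)
  then show "(\<lambda>x. torus_cos a b x * (f x + g x)) \<in> trig_poly" "(\<lambda>x. torus_sin a b x * (f x + g x)) \<in> trig_poly"
    by (simp_all add: distrib_left trig_poly.add)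
next
  case (scale f c)
  then show "(\<lambda>x. torus_cos a b x * (c * f x)) \<in> trig_poly" "(\<lambda>x. torus_sin a b x * (c * f x)) \<in> trig_poly"
    using trig_poly.scale[of _ c] by (simp_all add: mult.left_commute)
qed

lemma trig_poly_mult: "f \<in> trig_poly \<Longrightarrow> g \<in> trig_poly \<Longrightarrow> (\<lambda>x. f x * g x) \<in> trig_poly"
proof (induction f rule: trig_poly.induct)
  case (add f1 f2)
  then show ?case by (simp add: distrib_right trig_poly.add)
next
  case (scale f c)
  then show ?case using trig_poly.scale[of _ c] by (simp add: mult.assoc)
qed (simp_all add: trig_poly_mult_char)

lemma continuous_on_trig_poly: "f \<in> trig_poly \<Longrightarrow> continuous_on S f"
  by (induction f rule: trig_poly.induct)
    (auto simp: torus_cos_def torus_sin_def torus_phase_def intro!: continuous_intros)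

lemma trig_poly_bounded: "f \<in> trig_poly \<Longrightarrow> \<exists>B. \<forall>x. \<bar>f x\<bar> \<le> B"
proof (induction f rule: trig_poly.induct)
  case (add f g)
  then obtain B1 B2 where "\<forall>x. \<bar>f x\<bar> \<le> B1" "\<forall>x. \<bar>g x\<bar> \<le> B2" by blast
  then have "\<forall>x. \<bar>f x + g x\<bar> \<le> B1 + B2" by (meson abs_triangle_ineq add_mono order_trans)
  then show ?case by blast
next
  case (scale f c)
  then obtain B where "\<forall>x. \<bar>f x\<bar> \<le> B" by blast
  then have "\<forall>x. \<bar>c * f x\<bar> \<le> \<bar>c\<bar> * B" by (simp add: abs_mult mult_left_mono)
  then show ?case by blast
qed (auto simp: torus_cos_def torus_sin_def intro!: exI[of _ 1])

definition torus_embedding :: "real^2 \<Rightarrow> complex \<times> complex" where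
  "torus_embedding x = (cis (2*pi * x$1), cis (2*pi * x$2))"

lemma trig_poly_real_polynomial_function:
  assumes "real_polynomial_function p"
  shows "(\<lambda>x. p (torus_embedding x)) \<in> trig_poly"
  using assms
proof (induction p)
  case (linear p)
  have decomp: "(z, w) = Re z *\<^sub>R (1, 0) + Im z *\<^sub>R (\<i>, 0) + Re w *\<^sub>R (0, 1) + Im w *\<^sub>R (0, \<i>)"
    for z w :: complex
    by (simp add: complex_eq_iff)
  have lin: "linear p" by (rule bounded_linear.linear[OF linear])
  have "p (torus_embedding x) = p (1, 0) * torus_cos 1 0 x + p (\<i>, 0) * torus_sin 1 0 x
      + p (0, 1) * torus_cos 0 1 x + p (0, \<i>) * torus_sin 0 1 x" for x
    unfolding torus_embedding_def decomp[of "cis (2*pi * x$1)"]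
    by (simp only: linear_add[OF lin] linear_scale[OF lin] real_scaleR_def cis.simps)
      (simp add: torus_cos_def torus_sin_def torus_phase_def mult.commute)
  moreover have "(\<lambda>x. p (1, 0) * torus_cos 1 0 x + p (\<i>, 0) * torus_sin 1 0 x
      + p (0, 1) * torus_cos 0 1 x + p (0, \<i>) * torus_sin 0 1 x) \<in> trig_poly"
    by (intro trig_poly.add trig_poly.scale trig_poly.cos trig_poly.sin)
  ultimately show ?case by simp
qed (auto intro: trig_poly_const trig_poly.add trig_poly_mult)

lemma cis_2pi_eq_imp_Ints:
  assumes "cis (2*pi * a) = cis (2*pi * b)"
  shows "a - b \<in> \<int>"
proof -
  have "cos (2*pi * (a - b)) = 1"
    using arg_cong[OF cis_divide[of "2*pi * a" "2*pi * b", unfolded assms], of Re]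
    by (simp add: right_diff_distrib)
  then obtain n :: int where "2*pi * (a - b) = of_int n * 2 * pi"
    unfolding cos_one_2pi_int by blast
  then have "a - b = of_int n" by simp
  then show ?thesis by simp
qed

lemma sum_Basis_vec_nth [simp]: "(\<Sum>b\<in>(Basis :: (real^'n) set). b $ i) = 1"
proof -
  have "(One :: real^'n) \<bullet> axis i 1 = 1"
    by (rule inner_sum_Basis) (auto simp: Basis_vec_def)
  then show ?thesis by (simp add: cart_eq_inner_axis[symmetric])
qed

definition torus_rep :: "real^2 \<Rightarrow> real^2" where
  "torus_rep x = (\<chi> i. frac (x$i))"

lemma torus_rep_mem_cbox: "torus_rep x \<in> cbox 0 One"
  unfolding mem_box_cart by (auto simp: torus_rep_def frac_lt_1 less_imp_le)

lemma torus_fun_torus_rep: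
  assumes "torus_fun f"
  shows "f (torus_rep x) = f x"
proof -
  have "f (torus_rep x + (\<chi> i. of_int \<lfloor>x$i\<rfloor>)) = f (torus_rep x)"
    using assms unfolding torus_fun_def by simp
  moreover have "torus_rep x + (\<chi> i. of_int \<lfloor>x$i\<rfloor>) = x"
    by (simp add: torus_rep_def frac_def vec_eq_iff)
  ultimately show ?thesis by simp
qed

lemma torus_fun_eq_if_embedding_eq:
  assumes "torus_fun f" "torus_embedding x = torus_embedding y"
  shows "f x = f y"
proof -
  have "(x - y) $ i \<in> \<int>" for i
    using assms(2) cis_2pi_eq_imp_Ints[of "x$i" "y$i"] exhaust_2[of i]
    by (auto simp: torus_embedding_def)
  then have "f (y + (x - y)) = f y"
    using assms(1) unfolding torus_fun_def by blast
  then show ?thesis by simp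
qed

lemma torus_embedding_continuous [continuous_intros]: "continuous_on S torus_embedding"
  unfolding torus_embedding_def by (intro continuous_intros)

lemma torus_embedding_torus_rep: "torus_embedding (torus_rep x) = torus_embedding x"
proof -
  have "cis (2*pi * frac a) = cis (2*pi * a)" for a :: real
    using cis_divide[of "2*pi * a" "2*pi * of_int \<lfloor>a\<rfloor>"]
    by (simp add: frac_def right_diff_distrib)
  then show ?thesis by (simp add: torus_embedding_def torus_rep_def)
qed

text \<open>A continuous periodic function factors continuously through the compact image of the
  fundamental domain, because the embedding restricted to the fundamental domain is a quotient map.\<close>
lemma torus_fun_factor:
  assumes f: "torus_fun f"
  obtains g where "continuous_on (torus_embedding ` cbox 0 One) g" "\<And>x. g (torus_embedding x) = f x"
proof
  let ?S = "cbox 0 One :: (real^2) set" and ?T = "torus_embedding ` cbox 0 One"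
  define g where "g p = f (SOME x. x \<in> ?S \<and> torus_embedding x = p)" for p
  show g: "g (torus_embedding x) = f x" for x
  proof -
    have "\<exists>y. y \<in> ?S \<and> torus_embedding y = torus_embedding x"
      using torus_rep_mem_cbox torus_embedding_torus_rep by blast
    then have "torus_embedding (SOME y. y \<in> ?S \<and> torus_embedding y = torus_embedding x) = torus_embedding x"
      by (rule someI2_ex) blast
    then show ?thesis
      unfolding g_def using torus_fun_eq_if_embedding_eq[OF f] by blast
  qed
  have cont_f: "continuous_on ?S f"
    using f unfolding torus_fun_def by (blast intro: continuous_on_subset)
  show "continuous_on ?T g"
    unfolding continuous_openin_preimage_eq
  proof (intro allI impI)
    fix V :: "real set" assume "open V"
    then have "openin (top_of_set ?S) (?S \<inter> f -` V)"
      using cont_f unfolding continuous_openin_preimage_eq by blast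
    moreover have "?S \<inter> torus_embedding -` (?T \<inter> g -` V) = ?S \<inter> f -` V"
      by (simp add: set_eq_iff g) blast
    moreover have "openin (top_of_set ?S) (?S \<inter> torus_embedding -` (?T \<inter> g -` V))
        \<longleftrightarrow> openin (top_of_set ?T) (?T \<inter> g -` V)"
      by (rule Abstract_Topology_2.continuous_imp_quotient_map) (auto intro: continuous_intros)
    ultimately show "openin (top_of_set ?T) (?T \<inter> g -` V)"
      by simp
  qed
qed

theorem torus_fun_approx_trig_poly:
  assumes f: "torus_fun f" and e: "0 < e"
  obtains q where "q \<in> trig_poly" "\<And>x. \<bar>f x - q x\<bar> < e"
proof -
  obtain g where g: "continuous_on (torus_embedding ` cbox 0 One) g" "\<And>x. g (torus_embedding x) = f x"
    using torus_fun_factor[OF f] by blast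
  have "compact (torus_embedding ` cbox 0 One)"
    by (intro compact_continuous_image compact_cbox continuous_intros)
  then obtain p where p: "real_polynomial_function p"
    "\<And>y. y \<in> torus_embedding ` cbox 0 One \<Longrightarrow> \<bar>g y - p y\<bar> < e"
    using Stone_Weierstrass_real_polynomial_function[OF _ g(1) e] by blast
  have "\<bar>f x - p (torus_embedding x)\<bar> < e" for x
    using p(2)[of "torus_embedding x"] g(2)[of x] torus_rep_mem_cbox[of x] torus_embedding_torus_rep[of x]
    by (metis image_eqI)
  with trig_poly_real_polynomial_function[OF p(1)] show thesis by (rule that)
qed

lemma torus_fun_bounded:
  assumes "torus_fun f"
  obtains B where "\<And>x. \<bar>f x\<bar> \<le> B"
proof -
  obtain q where q: "q \<in> trig_poly" "\<And>x. \<bar>f x - q x\<bar> < 1"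
    using torus_fun_approx_trig_poly[OF assms, of 1] by auto
  obtain B where B: "\<forall>x. \<bar>q x\<bar> \<le> B" using trig_poly_bounded[OF q(1)] by blast
  have "\<bar>f x\<bar> \<le> B + 1" for x using q(2)[of x] B[rule_format, of x] by linarith
  then show thesis by (rule that)
qed

lemma cart2_image_cbox:
  "(\<lambda>x::real^2. (x$1, x$2)) ` cbox u v = cbox (u$1, u$2) (v$1, v$2)"
proof (intro set_eqI iffI)
  fix p assume "p \<in> cbox (u$1, u$2) (v$1, v$2)"
  then have "vector [fst p, snd p] \<in> cbox u v" "p = (\<lambda>x::real^2. (x$1, x$2)) (vector [fst p, snd p])"
    by (auto simp: cbox_Pair_eq mem_box_cart forall_2)
  then show "p \<in> (\<lambda>x::real^2. (x$1, x$2)) ` cbox u v" by blast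
qed (auto simp: cbox_Pair_eq mem_box_cart)

lemma cart2_of_pair_image_cbox:
  "(\<lambda>p. vector [fst p, snd p] :: real^2) ` cbox (a, b) (c, d) = cbox (vector [a, b]) (vector [c, d])"
proof (intro set_eqI iffI)
  fix x :: "real^2" assume "x \<in> cbox (vector [a, b]) (vector [c, d])"
  moreover have "x = vector [x$1, x$2]" by (simp add: vec_eq_iff forall_2)
  ultimately show "x \<in> (\<lambda>p. vector [fst p, snd p] :: real^2) ` cbox (a, b) (c, d)"
    by (auto simp: cbox_Pair_eq mem_box_cart forall_2 intro!: image_eqI[of _ _ "(x$1, x$2)"])
qed (auto simp: cbox_Pair_eq mem_box_cart forall_2)

lemma integral_unit_square_cart:
  fixes F :: "real \<times> real \<Rightarrow> real"
  assumes "continuous_on UNIV F"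
  shows "integral (cbox 0 One) (\<lambda>x::real^2. F (x$1, x$2)) = integral (cbox (0, 0) (1, 1)) F"
proof -
  have "F integrable_on cbox (0, 0) (1, 1)"
    using assms by (intro integrable_continuous) (rule continuous_on_subset, auto)
  then have "(F has_integral integral (cbox (0, 0) (1, 1)) F) (cbox (0, 0) (1, 1))" by blast
  then have "((\<lambda>x::real^2. F (x$1, x$2)) has_integral (1 / 1) *\<^sub>R integral (cbox (0, 0) (1, 1)) F)
      ((\<lambda>p. vector [fst p, snd p] :: real^2) ` cbox (0, 0) (1, 1))"
  proof (rule has_integral_twiddle[where r=1, rotated -1])
    show "\<exists>w z. (\<lambda>x::real^2. (x$1, x$2)) ` cbox u v = cbox w z" for u v
      by (intro exI, rule cart2_image_cbox)
    show "\<exists>w z. (\<lambda>p. vector [fst p, snd p] :: real^2) ` cbox u v = cbox w z" for u v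
      using cart2_of_pair_image_cbox[of "fst u" "snd u" "fst v" "snd v"] by auto
    show "Henstock_Kurzweil_Integration.content ((\<lambda>x::real^2. (x$1, x$2)) ` cbox u v)
        = 1 * Henstock_Kurzweil_Integration.content (cbox u v)" for u v
    proof -
      have ex2: "(\<exists>i::2. P i) \<longleftrightarrow> P 1 \<or> P 2" for P
        using forall_2[of "\<lambda>i. \<not> P i"] by blast
      show ?thesis unfolding cart2_image_cbox
        by (simp add: content_Pair content_cbox_if_cart UNIV_2 interval_eq_empty_cart forall_2 ex2
            content_real_if not_le)
    qed
  qed (auto simp: vec_eq_iff forall_2 intro: continuous_intros)
  moreover have "vector [0, 0] = (0 :: real^2)" "vector [1, 1] = (One :: real^2)"
    by (simp_all add: vec_eq_iff forall_2 vector_2)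
  then have "(\<lambda>p. vector [fst p, snd p] :: real^2) ` cbox (0, 0) (1, 1) = cbox 0 One"
    unfolding cart2_of_pair_image_cbox by simp
  ultimately show ?thesis
    by (simp add: integral_unique)
qed

lemma integral_unit_square_product:
  fixes g1 g2 :: "real \<Rightarrow> real"
  assumes "continuous_on UNIV g1" "continuous_on UNIV g2"
  shows "integral (cbox 0 One) (\<lambda>x::real^2. g1 (x$1) * g2 (x$2)) = integral {0..1} g1 * integral {0..1} g2"
proof -
  have cont: "continuous_on UNIV (\<lambda>p. g1 (fst p) * g2 (snd p))"
    by (intro continuous_intros continuous_on_compose2[OF assms(1)] continuous_on_compose2[OF assms(2)]) auto
  have "integral (cbox 0 One) (\<lambda>x::real^2. g1 (x$1) * g2 (x$2))
      = integral (cbox (0, 0) (1, 1)) (\<lambda>p. g1 (fst p) * g2 (snd p))"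
    using integral_unit_square_cart[OF cont] by simp
  also have "\<dots> = integral (cbox 0 1) (\<lambda>x. integral (cbox 0 1) (\<lambda>y. g1 (fst (x, y)) * g2 (snd (x, y))))"
    by (rule integral_prod_continuous) (rule continuous_on_subset[OF cont], simp)
  finally show ?thesis by (simp add: cbox_interval)
qed

lemma integral_unit_interval_cos_sin:
  fixes m :: int
  shows "integral {0..1} (\<lambda>s. cos (2*pi * (of_int m * s))) = (if m = 0 then 1 else 0)"
    and "integral {0..1} (\<lambda>s. sin (2*pi * (of_int m * s))) = 0"
proof -
  define c where "c = 2*pi * of_int m"
  have c: "sin c = 0" "cos c = 1"
    unfolding c_def using sin_int_2pin[of m] cos_int_2pin[of m] by (simp_all add: mult.commute)
  have "((\<lambda>s. cos (c * s)) has_integral (sin (c * 1) / c - sin (c * 0) / c)) {0..1}" if "c \<noteq> 0"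
  proof (rule fundamental_theorem_of_calculus)
    show "((\<lambda>s. sin (c * s) / c) has_vector_derivative cos (c * x)) (at x within {0..1})" for x
      unfolding has_real_derivative_iff_has_vector_derivative[symmetric]
      using that by (auto intro!: derivative_eq_intros)
  qed simp
  moreover have "((\<lambda>s. sin (c * s)) has_integral (- cos (c * 1) / c - - cos (c * 0) / c)) {0..1}"
    if "c \<noteq> 0"
  proof (rule fundamental_theorem_of_calculus)
    show "((\<lambda>s. - cos (c * s) / c) has_vector_derivative sin (c * x)) (at x within {0..1})" for x
      unfolding has_real_derivative_iff_has_vector_derivative[symmetric]
      using that by (auto intro!: derivative_eq_intros)
  qed simp
  ultimately show "integral {0..1} (\<lambda>s. cos (2*pi * (of_int m * s))) = (if m = 0 then 1 else 0)"
    and "integral {0..1} (\<lambda>s. sin (2*pi * (of_int m * s))) = 0"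
    using c by (cases "m = 0"; auto simp: c_def mult.assoc dest!: integral_unique)+
qed

lemma haar_int_torus_cos: "haar_int (torus_cos a b) = (if a = 0 \<and> b = 0 then 1 else 0)"
  and haar_int_torus_sin: "haar_int (torus_sin a b) = 0"
proof -
  let ?c = "\<lambda>m s. cos (2*pi * (of_int m * s))" and ?s = "\<lambda>m s. sin (2*pi * (of_int m * s))"
  have cont: "continuous_on UNIV (?c m)" "continuous_on UNIV (?s m)" for m
    by (intro continuous_intros)+
  have int: "(\<lambda>x::real^2. g1 (x$1) * g2 (x$2)) integrable_on cbox 0 One"
    if "continuous_on UNIV g1" "continuous_on UNIV g2" for g1 g2 :: "real \<Rightarrow> real"
    using that by (intro integrable_continuous continuous_on_subset[OF continuous_on_mult]
        continuous_on_compose2[OF that(1)] continuous_on_compose2[OF that(2)] continuous_intros) auto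
  have "haar_int (torus_cos a b) = integral (cbox 0 One) (\<lambda>x::real^2. ?c a (x$1) * ?c b (x$2))
      - integral (cbox 0 One) (\<lambda>x::real^2. ?s a (x$1) * ?s b (x$2))"
    unfolding haar_int_def torus_cos_def torus_phase_def distrib_left cos_add
    by (intro integral_diff int cont)
  then show "haar_int (torus_cos a b) = (if a = 0 \<and> b = 0 then 1 else 0)"
    unfolding integral_unit_square_product[OF cont(1) cont(1)] integral_unit_square_product[OF cont(2) cont(2)]
    by (simp add: integral_unit_interval_cos_sin)
  have "haar_int (torus_sin a b) = integral (cbox 0 One) (\<lambda>x::real^2. ?s a (x$1) * ?c b (x$2))
      + integral (cbox 0 One) (\<lambda>x::real^2. ?c a (x$1) * ?s b (x$2))"
    unfolding haar_int_def torus_sin_def torus_phase_def distrib_left sin_add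
    by (intro integral_add int cont)
  then show "haar_int (torus_sin a b) = 0"
    unfolding integral_unit_square_product[OF cont(2) cont(1)] integral_unit_square_product[OF cont(1) cont(2)]
    by (simp add: integral_unit_interval_cos_sin)
qed

lemma integrable_on_cbox_torus_fun: "torus_fun f \<Longrightarrow> f integrable_on cbox a b"
  unfolding torus_fun_def by (blast intro: integrable_continuous continuous_on_subset)

lemma haar_int_eq_0_imp_eq_0:
  assumes f: "torus_fun f" and nonneg: "\<And>x. 0 \<le> f x" and "haar_int f = 0"
  shows "f x = 0"
proof -
  have "f (torus_rep x) = 0"
  proof (rule has_integral_0_cbox_imp_0[of 0 One f])
    show "continuous_on (cbox 0 One) f"
      using f unfolding torus_fun_def by (blast intro: continuous_on_subset)
    show "(f has_integral 0) (cbox 0 One)"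
      using assms integrable_on_cbox_torus_fun[OF f] unfolding haar_int_def
      by (metis integrable_integral)
    have "(1/2) *\<^sub>R One \<in> box 0 (One :: real^2)"
      unfolding mem_box_cart by simp
    then show "box 0 (One :: real^2) \<noteq> {}" by blast
  qed (use nonneg torus_rep_mem_cbox in auto)
  then show ?thesis using torus_fun_torus_rep[OF f] by simp
qed

section \<open>Fourier coefficients of the curve measures\<close>

definition fourier_cos :: "(real \<Rightarrow> real) \<Rightarrow> real \<Rightarrow> real" where
  "fourier_cos g t = (\<integral>u. cos (2*pi*t*g u) \<partial>lborel_01)"

definition fourier_sin :: "(real \<Rightarrow> real) \<Rightarrow> real \<Rightarrow> real" where
  "fourier_sin g t = (\<integral>u. sin (2*pi*t*g u) \<partial>lborel_01)"

lemma fourier_measurable [measurable]: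
  assumes [measurable]: "g \<in> borel_measurable borel"
  shows "fourier_cos g \<in> borel_measurable borel" "fourier_sin g \<in> borel_measurable borel"
proof -
  have "(\<lambda>(t, u). cos (2*pi*t*g u)) \<in> borel_measurable (borel \<Otimes>\<^sub>M lborel_01)"
    "(\<lambda>(t, u). sin (2*pi*t*g u)) \<in> borel_measurable (borel \<Otimes>\<^sub>M lborel_01)"
    by measurable
  then show "fourier_cos g \<in> borel_measurable borel" "fourier_sin g \<in> borel_measurable borel"
    unfolding fourier_cos_def[abs_def] fourier_sin_def[abs_def]
    by (auto intro: lborel_01.borel_measurable_lebesgue_integral)
qed

lemma abs_fourier_le_1:
  assumes [measurable]: "g \<in> borel_measurable borel"
  shows "\<bar>fourier_cos g t\<bar> \<le> 1" "\<bar>fourier_sin g t\<bar> \<le> 1"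
  unfolding fourier_cos_def fourier_sin_def by (intro abs_integral_lborel_01_le; simp)+

lemma cesaro_mean_fourier_cos_sin_sq_tendsto_0:
  fixes g :: "real \<Rightarrow> real"
  assumes [measurable]: "g \<in> borel_measurable borel" and "inj_on g {0<..<1}"
  shows "(cesaro_mean (\<lambda>t. (fourier_cos g t)\<^sup>2 + (fourier_sin g t)\<^sup>2) \<longlongrightarrow> 0) at_top"
  using lborel_01.cesaro_mean_fourier_sq_tendsto_0[OF _ AE_lborel_01_pair_inj[OF assms]]
  unfolding fourier_cos_def fourier_sin_def by simp

lemma fourier_cos_sin_shift:
  assumes [measurable]: "g \<in> borel_measurable borel"
  shows "(\<integral>u. cos (2*pi*t*g u + c) \<partial>lborel_01) = fourier_cos g t * cos c - fourier_sin g t * sin c"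
    and "(\<integral>u. sin (2*pi*t*g u + c) \<partial>lborel_01) = fourier_sin g t * cos c + fourier_cos g t * sin c"
proof -
  have int: "integrable lborel_01 (\<lambda>u. cos (2*pi*t*g u) * d)" "integrable lborel_01 (\<lambda>u. sin (2*pi*t*g u) * d)"
    for d by (intro lborel_01.integrable_const_bound[where B="\<bar>d\<bar>"] AE_I2; simp add: abs_mult mult_left_le_one_le)+
  have "(\<integral>u. cos (2*pi*t*g u + c) \<partial>lborel_01)
      = (\<integral>u. cos (2*pi*t*g u) * cos c - sin (2*pi*t*g u) * sin c \<partial>lborel_01)"
    by (simp add: cos_add)
  also have "\<dots> = fourier_cos g t * cos c - fourier_sin g t * sin c"
    unfolding Bochner_Integration.integral_diff[OF int] by (simp add: fourier_cos_def fourier_sin_def)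
  finally show "(\<integral>u. cos (2*pi*t*g u + c) \<partial>lborel_01) = fourier_cos g t * cos c - fourier_sin g t * sin c" .
  have "(\<integral>u. sin (2*pi*t*g u + c) \<partial>lborel_01)
      = (\<integral>u. sin (2*pi*t*g u) * cos c + cos (2*pi*t*g u) * sin c \<partial>lborel_01)"
    by (simp add: sin_add)
  also have "\<dots> = fourier_sin g t * cos c + fourier_cos g t * sin c"
    unfolding Bochner_Integration.integral_add[OF int(2) int(1)] by (simp add: fourier_cos_def fourier_sin_def)
  finally show "(\<integral>u. sin (2*pi*t*g u + c) \<partial>lborel_01) = fourier_sin g t * cos c + fourier_cos g t * sin c" .
qed

lemma curve_int_eq_lborel_01:
  assumes [measurable]: "\<phi> \<in> borel_measurable borel"
    and cont: "continuous_on UNIV f" and bound: "\<And>x. \<bar>f x\<bar> \<le> B"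
  shows "curve_int \<phi> x0 t f = (\<integral>u. f (t *\<^sub>R \<phi> u + x0) \<partial>lborel_01)"
  unfolding curve_int_def using bound
  by (intro integral_Ioo_eq_lborel_01 borel_measurable_continuous_on[OF cont]) auto

lemma curve_int_torus_cos_sin:
  fixes a b :: int and \<phi> :: "real \<Rightarrow> real^2" and x0 :: "real^2"
  assumes [measurable]: "\<phi> \<in> borel_measurable borel"
  defines "g \<equiv> \<lambda>u. torus_phase a b (\<phi> u)" and "c \<equiv> 2*pi * torus_phase a b x0"
  shows "curve_int \<phi> x0 t (torus_cos a b) = fourier_cos g t * cos c - fourier_sin g t * sin c"
    and "curve_int \<phi> x0 t (torus_sin a b) = fourier_sin g t * cos c + fourier_cos g t * sin c"
proof -
  have "continuous_on UNIV (torus_phase a b)"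
    unfolding torus_phase_def by (intro continuous_intros)
  then have [measurable]: "g \<in> borel_measurable borel"
    unfolding g_def by (rule borel_measurable_continuous_on) simp
  have phase: "2*pi * torus_phase a b (t *\<^sub>R \<phi> u + x0) = 2*pi*t*g u + c" for u
    by (simp add: g_def c_def torus_phase_def algebra_simps)
  have "curve_int \<phi> x0 t (torus_cos a b) = (\<integral>u. torus_cos a b (t *\<^sub>R \<phi> u + x0) \<partial>lborel_01)"
    by (rule curve_int_eq_lborel_01[OF assms(1) continuous_on_trig_poly[OF trig_poly.cos], where B=1])
      (simp add: torus_cos_def)
  also have "\<dots> = fourier_cos g t * cos c - fourier_sin g t * sin c"
    by (simp add: torus_cos_def phase fourier_cos_sin_shift)
  finally show "curve_int \<phi> x0 t (torus_cos a b) = fourier_cos g t * cos c - fourier_sin g t * sin c" .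
  have "curve_int \<phi> x0 t (torus_sin a b) = (\<integral>u. torus_sin a b (t *\<^sub>R \<phi> u + x0) \<partial>lborel_01)"
    by (rule curve_int_eq_lborel_01[OF assms(1) continuous_on_trig_poly[OF trig_poly.sin], where B=1])
      (simp add: torus_sin_def)
  also have "\<dots> = fourier_sin g t * cos c + fourier_cos g t * sin c"
    by (simp add: torus_sin_def phase fourier_cos_sin_shift)
  finally show "curve_int \<phi> x0 t (torus_sin a b) = fourier_sin g t * cos c + fourier_cos g t * sin c" .
qed

lemma curve_int_const: "\<phi> \<in> borel_measurable borel \<Longrightarrow> curve_int \<phi> x0 t (\<lambda>x. c) = c"
  using curve_int_eq_lborel_01[of \<phi> "\<lambda>x. c" "\<bar>c\<bar>"] by simp

lemma curve_int_add:
  assumes \<phi> [measurable]: "\<phi> \<in> borel_measurable borel"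
    and f: "continuous_on UNIV f" "\<And>x. \<bar>f x\<bar> \<le> Bf" and g: "continuous_on UNIV g" "\<And>x. \<bar>g x\<bar> \<le> Bg"
  shows "curve_int \<phi> x0 t (\<lambda>x. f x + g x) = curve_int \<phi> x0 t f + curve_int \<phi> x0 t g"
proof -
  have [measurable]: "(\<lambda>u. f (t *\<^sub>R \<phi> u + x0)) \<in> borel_measurable borel"
    "(\<lambda>u. g (t *\<^sub>R \<phi> u + x0)) \<in> borel_measurable borel"
    by (intro borel_measurable_continuous_on[OF f(1)] borel_measurable_continuous_on[OF g(1)]; simp)+
  have "integrable lborel_01 (\<lambda>u. f (t *\<^sub>R \<phi> u + x0))"
    using f(2) by (intro lborel_01.integrable_const_bound[where B=Bf] AE_I2) auto
  moreover have "integrable lborel_01 (\<lambda>u. g (t *\<^sub>R \<phi> u + x0))"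
    using g(2) by (intro lborel_01.integrable_const_bound[where B=Bg] AE_I2) auto
  moreover have fg: "\<bar>f x + g x\<bar> \<le> Bf + Bg" for x using f(2)[of x] g(2)[of x] by linarith
  ultimately show ?thesis
    using curve_int_eq_lborel_01[OF \<phi> f] curve_int_eq_lborel_01[OF \<phi> g]
      curve_int_eq_lborel_01[OF \<phi> continuous_on_add[OF f(1) g(1)] fg] by simp
qed

lemma curve_int_scale: "curve_int \<phi> x0 t (\<lambda>x. c * f x) = c * curve_int \<phi> x0 t f"
  unfolding curve_int_def by (rule integral_mult_right)

lemma tendsto_curve_int_torus_char:
  assumes \<phi> [measurable]: "\<phi> \<in> borel_measurable borel"
    and fourier: "\<And>a b. (a, b) \<noteq> (0, 0) \<Longrightarrow>
      (fourier_cos (\<lambda>u. torus_phase a b (\<phi> u)) \<longlongrightarrow> 0) F \<and>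
      (fourier_sin (\<lambda>u. torus_phase a b (\<phi> u)) \<longlongrightarrow> 0) F"
  shows "((\<lambda>t. curve_int \<phi> x0 t (torus_cos a b)) \<longlongrightarrow> haar_int (torus_cos a b)) F \<and>
         ((\<lambda>t. curve_int \<phi> x0 t (torus_sin a b)) \<longlongrightarrow> haar_int (torus_sin a b)) F"
proof (cases "(a, b) = (0, 0)")
  case True
  then have "torus_cos a b = (\<lambda>x. 1)" "torus_sin a b = (\<lambda>x. 0)"
    by (simp_all add: fun_eq_iff torus_cos_def torus_sin_def torus_phase_def)
  then show ?thesis
    using haar_int_torus_cos[of a b] haar_int_torus_sin[of a b] True by (simp add: curve_int_const[OF \<phi>])
next
  case False
  then show ?thesis
    unfolding curve_int_torus_cos_sin[OF \<phi>] haar_int_torus_cos haar_int_torus_sin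
    using fourier[OF False] by (auto intro!: tendsto_eq_intros)
qed

lemma tendsto_curve_int_trig_poly:
  assumes \<phi> [measurable]: "\<phi> \<in> borel_measurable borel"
    and fourier: "\<And>a b. (a, b) \<noteq> (0, 0) \<Longrightarrow>
      (fourier_cos (\<lambda>u. torus_phase a b (\<phi> u)) \<longlongrightarrow> 0) F \<and>
      (fourier_sin (\<lambda>u. torus_phase a b (\<phi> u)) \<longlongrightarrow> 0) F"
    and "q \<in> trig_poly"
  shows "((\<lambda>t. curve_int \<phi> x0 t q) \<longlongrightarrow> haar_int q) F"
  using assms(3)
proof (induction q rule: trig_poly.induct)
  case (cos a b)
  show ?case using tendsto_curve_int_torus_char[OF \<phi> fourier] by blast
next
  case (sin a b)
  show ?case using tendsto_curve_int_torus_char[OF \<phi> fourier] by blast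
next
  case (add f g)
  obtain Bf Bg where Bf: "\<And>x. \<bar>f x\<bar> \<le> Bf" and Bg: "\<And>x. \<bar>g x\<bar> \<le> Bg"
    using trig_poly_bounded[OF add.hyps(1)] trig_poly_bounded[OF add.hyps(2)] by blast
  have "haar_int (\<lambda>x. f x + g x) = haar_int f + haar_int g"
    unfolding haar_int_def using add.hyps
    by (intro integral_add integrable_continuous continuous_on_trig_poly)
  then show ?case
    using curve_int_add[OF \<phi> continuous_on_trig_poly[OF add.hyps(1)] Bf continuous_on_trig_poly[OF add.hyps(2)] Bg]
    by (simp add: tendsto_add add.IH)
next
  case (scale f c)
  then show ?case
    by (simp add: curve_int_scale haar_int_def tendsto_mult_left)
qed

lemma abs_curve_int_diff_le:
  assumes \<phi> [measurable]: "\<phi> \<in> borel_measurable borel"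
    and f: "continuous_on UNIV f" "\<And>x. \<bar>f x\<bar> \<le> Bf" and g: "continuous_on UNIV g" "\<And>x. \<bar>g x\<bar> \<le> Bg"
    and close: "\<And>x. \<bar>f x - g x\<bar> \<le> c"
  shows "\<bar>curve_int \<phi> x0 t f - curve_int \<phi> x0 t g\<bar> \<le> c"
proof -
  have [measurable]: "(\<lambda>u. f (t *\<^sub>R \<phi> u + x0)) \<in> borel_measurable borel"
    "(\<lambda>u. g (t *\<^sub>R \<phi> u + x0)) \<in> borel_measurable borel"
    by (intro borel_measurable_continuous_on[OF f(1)] borel_measurable_continuous_on[OF g(1)]; simp)+
  have "integrable lborel_01 (\<lambda>u. f (t *\<^sub>R \<phi> u + x0))"
    using f(2) by (intro lborel_01.integrable_const_bound[where B=Bf] AE_I2) auto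
  moreover have "integrable lborel_01 (\<lambda>u. g (t *\<^sub>R \<phi> u + x0))"
    using g(2) by (intro lborel_01.integrable_const_bound[where B=Bg] AE_I2) auto
  ultimately have "curve_int \<phi> x0 t f - curve_int \<phi> x0 t g
      = (\<integral>u. f (t *\<^sub>R \<phi> u + x0) - g (t *\<^sub>R \<phi> u + x0) \<partial>lborel_01)"
    using curve_int_eq_lborel_01[OF \<phi> f] curve_int_eq_lborel_01[OF \<phi> g] by simp
  also have "\<bar>\<dots>\<bar> \<le> c"
    using close by (intro abs_integral_lborel_01_le) auto
  finally show ?thesis .
qed

lemma abs_haar_int_diff_le:
  assumes "f integrable_on cbox 0 One" "g integrable_on cbox 0 One" and close: "\<And>x. \<bar>f x - g x\<bar> \<le> c"
  shows "\<bar>haar_int f - haar_int g\<bar> \<le> c"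
proof -
  have "\<bar>haar_int f - haar_int g\<bar> = \<bar>integral (cbox 0 One) (\<lambda>x. f x - g x)\<bar>"
    unfolding haar_int_def using assms by (simp add: integral_diff)
  also have "\<dots> \<le> c * Henstock_Kurzweil_Integration.content (cbox (0 :: real^2) One)"
    using Henstock_Kurzweil_Integration.integrable_bound[of c "\<lambda>x. f x - g x" 0 One]
      integrable_diff[OF assms(1,2)] close close[of 0] by force
  finally show ?thesis by (simp add: content_unit)
qed

lemma tendsto_curve_int_torus_fun:
  assumes \<phi> [measurable]: "\<phi> \<in> borel_measurable borel"
    and trig: "\<And>q. q \<in> trig_poly \<Longrightarrow> ((\<lambda>t. curve_int \<phi> x0 t q) \<longlongrightarrow> haar_int q) F"
    and f: "torus_fun f"
  shows "((\<lambda>t. curve_int \<phi> x0 t f) \<longlongrightarrow> haar_int f) F"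
proof (rule tendstoI)
  fix e :: real assume "0 < e"
  then obtain q where q: "q \<in> trig_poly" "\<And>x. \<bar>f x - q x\<bar> < e / 3"
    using torus_fun_approx_trig_poly[OF f, of "e / 3"] by auto
  obtain Bf where Bf: "\<And>x. \<bar>f x\<bar> \<le> Bf" using torus_fun_bounded[OF f] by blast
  obtain Bq where Bq: "\<And>x. \<bar>q x\<bar> \<le> Bq" using trig_poly_bounded[OF q(1)] by blast
  have f_cont: "continuous_on UNIV f" using f by (simp add: torus_fun_def)
  have close: "\<bar>f x - q x\<bar> \<le> e / 3" for x using q(2)[of x] by simp
  have curve_close: "\<bar>curve_int \<phi> x0 t f - curve_int \<phi> x0 t q\<bar> \<le> e / 3" for t
    by (rule abs_curve_int_diff_le[OF \<phi> f_cont Bf continuous_on_trig_poly[OF q(1)] Bq close])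
  have haar_close: "\<bar>haar_int f - haar_int q\<bar> \<le> e / 3"
    using q(1) by (intro abs_haar_int_diff_le close integrable_on_cbox_torus_fun[OF f]
        integrable_continuous continuous_on_trig_poly)
  have "\<forall>\<^sub>F t in F. dist (curve_int \<phi> x0 t q) (haar_int q) < e / 3"
    using tendstoD[OF trig[OF q(1)], of "e / 3"] \<open>0 < e\<close> by simp
  then show "\<forall>\<^sub>F t in F. dist (curve_int \<phi> x0 t f) (haar_int f) < e"
  proof eventually_elim
    case (elim t)
    then show ?case
      using curve_close[of t] haar_close unfolding dist_real_def abs_le_iff abs_less_iff by linarith
  qed
qed

theorem fourier_tendsto_0_on_density_one_set:
  fixes g :: "'i::countable \<Rightarrow> real \<Rightarrow> real"
  assumes g_meas [measurable]: "\<And>k. g k \<in> borel_measurable borel"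
    and inj: "\<And>k. k \<in> K \<Longrightarrow> inj_on (g k) {0<..<1}"
  obtains A where "A \<subseteq> {0..}" "A \<in> sets borel" "has_density_one A"
    "\<And>k. k \<in> K \<Longrightarrow> (fourier_cos (g k) \<longlongrightarrow> 0) (inf at_top (principal A)) \<and>
       (fourier_sin (g k) \<longlongrightarrow> 0) (inf at_top (principal A))"
proof -
  \<comment> \<open>halved so that the values lie in \<open>[0, 1]\<close>\<close>
  define h where "h k t = (if k \<in> K then ((fourier_cos (g k) t)\<^sup>2 + (fourier_sin (g k) t)\<^sup>2) / 2 else 0)"
    for k t
  have "h k \<in> borel_measurable borel" for k
    unfolding h_def by measurable
  moreover have "h k t \<in> {0..1}" for k t
  proof -
    have "(fourier_cos (g k) t)\<^sup>2 \<le> 1" "(fourier_sin (g k) t)\<^sup>2 \<le> 1"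
      using abs_fourier_le_1[OF g_meas, of k t] by (simp_all add: abs_square_le_1)
    then show ?thesis by (auto simp: h_def)
  qed
  moreover have "(cesaro_mean (h k) \<longlongrightarrow> 0) at_top" for k
  proof (cases "k \<in> K")
    case True
    then have "cesaro_mean (h k)
        = (\<lambda>T. cesaro_mean (\<lambda>t. (fourier_cos (g k) t)\<^sup>2 + (fourier_sin (g k) t)\<^sup>2) T / 2)"
      by (simp add: fun_eq_iff h_def cesaro_mean_def)
    then show ?thesis
      using tendsto_divide_zero[OF cesaro_mean_fourier_cos_sin_sq_tendsto_0[OF g_meas inj[OF True]], where c=2]
      by simp
  qed (simp add: h_def[abs_def] cesaro_mean_def[abs_def])
  ultimately obtain A where A: "A \<subseteq> {0..}" "A \<in> sets borel" "has_density_one A"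
    and lim: "\<And>k. (h k \<longlongrightarrow> 0) (inf at_top (principal A))"
    using density_one_set_tendsto_0[of h] by blast
  have "(fourier_cos (g k) \<longlongrightarrow> 0) (inf at_top (principal A)) \<and>
        (fourier_sin (g k) \<longlongrightarrow> 0) (inf at_top (principal A))" if "k \<in> K" for k
  proof -
    have root: "((\<lambda>t. sqrt (2 * h k t)) \<longlongrightarrow> 0) (inf at_top (principal A))"
      using tendsto_real_sqrt[OF tendsto_mult_left[OF lim[of k], of 2]] by simp
    have "\<bar>fourier_cos (g k) t\<bar> \<le> sqrt (2 * h k t)" "\<bar>fourier_sin (g k) t\<bar> \<le> sqrt (2 * h k t)" for t
      using that by (simp_all add: h_def real_le_rsqrt)
    then show ?thesis
      by (intro conjI Lim_null_comparison[OF always_eventually root]) auto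
  qed
  with A show thesis by (rule that)
qed

lemma sqrt_2_not_rational: "sqrt 2 \<notin> \<rat>"
proof
  assume "sqrt 2 \<in> \<rat>"
  then have "sqrt 2 \<in> \<int>" by (intro rational_algebraic_int_is_int) auto
  moreover have "1 < sqrt 2" "sqrt 2 < 2"
    using real_sqrt_less_iff[of 1 2] real_sqrt_less_iff[of 2 4] by simp_all
  moreover obtain m :: int where "sqrt 2 = of_int m"
    using \<open>sqrt 2 \<in> \<int>\<close> by (auto elim: Ints_cases)
  ultimately have "1 < m" "m < 2" by simp_all
  then show False by simp
qed

lemma int_comb_sqrt_2_eq_0_iff:
  fixes a b :: int
  shows "of_int a + of_int b * sqrt 2 = 0 \<longleftrightarrow> a = 0 \<and> b = 0"
proof
  assume eq: "of_int a + of_int b * sqrt 2 = 0"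
  show "a = 0 \<and> b = 0"
  proof (cases "b = 0")
    case False
    then have "sqrt 2 = - of_int a / of_int b" using eq by (simp add: field_simps)
    then have "sqrt 2 \<in> \<rat>" by simp
    then show ?thesis using sqrt_2_not_rational by blast
  qed (use eq in simp)
qed simp

definition cantor_curve :: "real \<Rightarrow> real^2" where
  "cantor_curve u = cantor_map u *\<^sub>R vector [1, sqrt 2]"

lemma cantor_curve_measurable [measurable]: "cantor_curve \<in> borel_measurable borel"
  unfolding cantor_curve_def by measurable

lemma cantor_curve_nth [simp]:
  "cantor_curve u $ 1 = cantor_map u" "cantor_curve u $ 2 = cantor_map u * sqrt 2"
  by (simp_all add: cantor_curve_def)

lemma torus_phase_cantor_curve:
  "torus_phase a b (cantor_curve u) = cantor_map u * (of_int a + of_int b * sqrt 2)"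
  by (simp add: torus_phase_def algebra_simps)

lemma inj_on_torus_phase_cantor_curve:
  assumes "(a, b) \<noteq> (0, 0)"
  shows "inj_on (\<lambda>u. torus_phase a b (cantor_curve u)) {0<..<1}"
proof -
  have "inj_on cantor_map {0<..<1}"
    using strict_mono_on_imp_inj_on[OF cantor_map_strict_mono] by (rule inj_on_subset) auto
  moreover have "of_int a + of_int b * sqrt 2 \<noteq> 0"
    using assms int_comb_sqrt_2_eq_0_iff by simp
  ultimately show ?thesis
    unfolding torus_phase_cantor_curve by (auto simp: inj_on_def)
qed

theorem weakly_equidistributed_cantor_curve: "weakly_equidistributed (curve_int cantor_curve x0)"
proof -
  define g where "g k u = torus_phase (fst k) (snd k) (cantor_curve u)" for k :: "int \<times> int" and u
  have "g k \<in> borel_measurable borel" for k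
    unfolding g_def torus_phase_cantor_curve by measurable
  moreover have "inj_on (g k) {0<..<1}" if "k \<in> - {(0, 0)}" for k
    using inj_on_torus_phase_cantor_curve[of "fst k" "snd k"] that unfolding g_def by simp
  ultimately obtain A where A: "A \<subseteq> {0..}" "A \<in> sets borel" "has_density_one A"
    and fourier: "\<And>k. k \<in> - {(0, 0)} \<Longrightarrow>
       (fourier_cos (g k) \<longlongrightarrow> 0) (inf at_top (principal A)) \<and>
       (fourier_sin (g k) \<longlongrightarrow> 0) (inf at_top (principal A))"
    using fourier_tendsto_0_on_density_one_set[of g "- {(0, 0)}"] by blast
  have fourier_ab: "(fourier_cos (\<lambda>u. torus_phase a b (cantor_curve u)) \<longlongrightarrow> 0) (inf at_top (principal A)) \<and>
       (fourier_sin (\<lambda>u. torus_phase a b (cantor_curve u)) \<longlongrightarrow> 0) (inf at_top (principal A))"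
    if "(a, b) \<noteq> (0, 0)" for a b
    using fourier[of "(a, b)"] that by (simp add: g_def[abs_def])
  have trig: "((\<lambda>t. curve_int cantor_curve x0 t q) \<longlongrightarrow> haar_int q) (inf at_top (principal A))"
    if "q \<in> trig_poly" for q
    by (rule tendsto_curve_int_trig_poly[where F="inf at_top (principal A)", OF cantor_curve_measurable fourier_ab that])
  have "((\<lambda>t. curve_int cantor_curve x0 t f) \<longlongrightarrow> haar_int f) (inf at_top (principal A))"
    if "torus_fun f" for f
    by (rule tendsto_curve_int_torus_fun[OF cantor_curve_measurable trig that])
  moreover have "A \<in> sets lebesgue" using A(2) by (simp add: sets_completionI_sets)
  ultimately show ?thesis
    using A(1,3) unfolding weakly_equidistributed_def has_density_one_def by blast
qed

lemma cos_2pi_add_int: "cos (2*pi * (x + of_int n)) = cos (2*pi * x)"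
  by (simp add: distrib_left cos_add cos_int_2pin sin_int_2pin)

lemma cos_ge_neg_half_on_cantor_digits:
  assumes "R \<in> {0..1/3} \<union> {2/3..1}"
  shows "- 1/2 \<le> cos (2*pi * (of_int N + R))"
proof -
  have half: "- 1/2 \<le> cos (2*pi * r)" if "0 \<le> r" "r \<le> 1/3" for r
  proof -
    have "cos (2*pi / 3) \<le> cos (2*pi * r)"
      using that by (intro cos_monotone_0_pi_le) auto
    moreover have "cos (2*pi / 3) = - 1/2"
      using cos_diff[of pi "pi / 3"] by (simp add: cos_60)
    ultimately show ?thesis by simp
  qed
  have "cos (2*pi * (of_int N + R)) = cos (2*pi * R)"
    using cos_2pi_add_int[of R N] by (simp add: add.commute)
  moreover have "cos (2*pi * R) = cos (2*pi * (1 - R))"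
    by (simp add: right_diff_distrib cos_diff)
  ultimately show ?thesis
    using assms half[of R] half[of "1 - R"] by auto
qed

text \<open>The bump vanishes on \<open>[-1/3, 1/3] + \<int>\<close>, which contains \<open>3^n\<close> times the Cantor set,
  but not on all of the torus.\<close>
definition gap_bump :: "real \<Rightarrow> real" where
  "gap_bump s = max 0 (- cos (2*pi * s) - 1/2)"

lemma gap_bump_times_pow3_cantor_map: "gap_bump (3 ^ n * cantor_map u) = 0"
proof -
  obtain N :: int and R where "3 ^ n * cantor_map u = of_int N + R" "R \<in> {0..1/3} \<union> {2/3..1}"
    using cantor_map_times_pow3[of n u] by blast
  then show ?thesis
    using cos_ge_neg_half_on_cantor_digits[of R N] by (simp add: gap_bump_def)
qed

lemma torus_fun_gap_bump: "torus_fun (\<lambda>x. gap_bump (x$1 - c))"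
  unfolding torus_fun_def
proof (intro conjI allI impI)
  show "continuous_on UNIV (\<lambda>x. gap_bump (x$1 - c))"
    unfolding gap_bump_def by (intro continuous_intros)
  fix v k :: "real^2" assume "\<forall>i. k $ i \<in> \<int>"
  then have "k $ 1 \<in> \<int>" ..
  then obtain m where "k $ 1 = of_int m" by (auto elim: Ints_cases)
  then have "(v + k) $ 1 - c = (v $ 1 - c) + of_int m" by simp
  then show "gap_bump ((v + k) $ 1 - c) = gap_bump (v $ 1 - c)"
    unfolding gap_bump_def by (simp only: cos_2pi_add_int)
qed

theorem not_equidistributed_cantor_curve: "\<not> equidistributed (curve_int cantor_curve x0)"
proof
  assume "equidistributed (curve_int cantor_curve x0)"
  define f where "f x = gap_bump (x$1 - x0$1)" for x :: "real^2"
  have f: "torus_fun f" unfolding f_def by (rule torus_fun_gap_bump)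
  with \<open>equidistributed _\<close> have lim: "((\<lambda>t. curve_int cantor_curve x0 t f) \<longlongrightarrow> haar_int f) at_top"
    unfolding equidistributed_def by blast
  have pow: "filterlim (\<lambda>n::nat. (3::real) ^ n) at_top sequentially"
    by (intro filterlim_at_infinity_imp_filterlim_at_top filterlim_realpow_sequentially_gt1) auto
  have vanish: "curve_int cantor_curve x0 (3 ^ n) f = 0" for n :: nat
    by (simp add: curve_int_def f_def gap_bump_times_pow3_cantor_map)
  from filterlim_compose[OF lim pow] have "(\<lambda>n::nat. 0) \<longlonglongrightarrow> haar_int f"
    unfolding vanish .
  then have "haar_int f = 0" by (simp add: LIMSEQ_const_iff)
  moreover have "0 \<le> f x" for x by (simp add: f_def gap_bump_def)
  ultimately have "f (x0 + axis 1 (1/2)) = 0"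
    using haar_int_eq_0_imp_eq_0[OF f] by blast
  then show False by (simp add: f_def gap_bump_def)
qed

theorem theorem5p3:
  shows "\<exists>\<phi> :: real \<Rightarrow> real^2. \<phi> \<in> borel_measurable lborel \<and>
           (\<forall>x0 :: real^2. weakly_equidistributed (curve_int \<phi> x0) \<and>
                           \<not> equidistributed (curve_int \<phi> x0))"
proof (intro exI[of _ cantor_curve] conjI allI)
  show "cantor_curve \<in> borel_measurable lborel" by simp
qed (rule weakly_equidistributed_cantor_curve not_equidistributed_cantor_curve)+

end
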